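(* Let $\ell\ge2$, $\rho\in(-\frac{1}{\ell-1},1)$, $m\in\{1,\dots,\ell\}$ and $\gamma>0$. Let $X=(X_1,\dots,X_\ell)^T$ be zero-mean Gaussian with covariance matrix having all diagonal entries $1$ and all off-diagonal entries $\rho$. For each $m$-subset $\mathcal{S}$ of $\{1,\dots,\ell\}$ let $U^+_{\mathcal{S}}(\gamma)=\sum_{i\in\mathcal{S}}X_i+\sqrt\gamma N^+_{\mathcal{S}}$, where the $N^+_{\mathcal{S}}$ are zero-mean unit-variance Gaussian random variables, and $X$ and all $N^+_{\mathcal{S}}$ are mutually independent. Using the conventions $\binom{\ell-2}{\ell-1}=0$ and $\binom{\ell-2}{-1}=0$, set \begin{align*} \eta_1&=\tbinom{\ell-1}{m-1}\tbinom{\ell-2}{m-1}m(1-\rho)(1+(\ell-1)\rho),\\ \eta_2&=\tbinom{\ell-1}{m-1}(1+(m-1)\rho)+\tbinom{\ell-2}{m-1}m(1+(\ell-2)\rho)+\tbinom{\ell-2}{m-2}((\ell-1)m\rho+(m-1)(1-\rho)),\\ \eta_3&=\tbinom{\ell-1}{m-1}(1+(m-1)\rho)+\tbinom{\ell-2}{m-1}(\ell-1)m\rho^2+\tbinom{\ell-2}{m-2}(\ell-1)\rho(1+(m-1)\rho),\\ \eta_4&=\tbinom{\ell-1}{m-1}\rho(1+(m-1)\rho)+\tbinom{\ell-2}{m-1}m\rho(1+(\ell-2)\rho)+\tbinom{\ell-2}{m-2}(1+(\ell-2)\rho)(1+(m-1)\rho). \end{align*} Then the error covariance matrix $\mathbb{E}[(X-\mathbb{E}[X|\omega])(X-\mathbb{E}[X|\omega])^T]$,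 where $\omega=(U^+_{\mathcal{S}}(\gamma):|\mathcal{S}|=m)$, has all diagonal entries equal to \[ d^+(\gamma)=1-\frac{\eta_3\gamma+\eta_1}{\gamma^2+\eta_2\gamma+\eta_1} \] and all off-diagonal entries equal to \[ \theta^+(\gamma)=\rho-\frac{\eta_4\gamma+\eta_1\rho}{\gamma^2+\eta_2\gamma+\eta_1}. \] *)

theory Defs
  imports "HOL-Probability.Probability"
begin

definition cbinom :: "int \<Rightarrow> int \<Rightarrow> real" where
  "cbinom n k = (if k < 0 \<or> n < 0 then 0 else real (nat n choose nat k))"

definition rv_sets :: "'a measure \<Rightarrow> 'i set \<Rightarrow> ('i \<Rightarrow> 'a \<Rightarrow> real) \<Rightarrow> 'a set set" where
  "rv_sets M I f = (\<Union>i\<in>I. {f i -` A \<inter> space M | A. A \<in> sets borel})"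

definition jointly_gaussian ::
  "'a measure \<Rightarrow> 'i set \<Rightarrow> ('i \<Rightarrow> 'a \<Rightarrow> real) \<Rightarrow> ('i \<Rightarrow> real) \<Rightarrow> ('i \<Rightarrow> 'i \<Rightarrow> real) \<Rightarrow> bool" where
  "jointly_gaussian M I X mu C \<longleftrightarrow>
     (\<forall>i\<in>I. X i \<in> borel_measurable M) \<and>
     (\<forall>c. let v = (\<Sum>i\<in>I. \<Sum>j\<in>I. c i * c j * C i j);
              e = (\<Sum>i\<in>I. c i * mu i);
              Y = (\<lambda>\<omega>. \<Sum>i\<in>I. c i * X i \<omega>)
          in (v > 0 \<longrightarrow> distributed M lborel Y (normal_density e (sqrt v))) \<and>
             (v = 0 \<longrightarrow> (AE \<omega> in M. Y \<omega> = e)))"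

end

(*
  The error X i - E[X i | U] is computed by exhibiting the conditional expectation as a linear
  estimator.  Write X i = (\<Sum>S. w i S * U S) + R i where the residual R i is uncorrelated with every
  observation U T.  All these variables are jointly Gaussian, so E[R i * cos (\<Sum>T. s T * U T)] and
  E[R i * sin (\<Sum>T. s T * U T)] vanish for all s (a first-order expansion of the characteristic
  function in the direction of R i); by Weierstrass approximation and a Dynkin argument R i is then
  orthogonal to every event generated by the observations, hence E[X i | U] = \<Sum>S. w i S * U S and
  the error covariance is Cov(R i, R j).
  By the symmetry of the equicorrelated model the weights can be taken of the form
  w i S = \<alpha> * [i \<in> S] + \<beta>, and uncorrelatedness reduces to two linear equations for \<alpha> and \<beta>.
  Cov(R i, R j) is then a finite sum, evaluated by counting the m-subsets through one or two given
  points, and simplifies to the stated rational functions of \<gamma>.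
*)

theory Submission
  imports Defs "HOL-Real_Asymp.Real_Asymp"
begin

section \<open>Sigma algebras generated by families of random variables\<close>

lemma rv_sets_subset_Pow: "rv_sets M I f \<subseteq> Pow (space M)"
  by (auto simp: rv_sets_def)

lemma space_sigma_rv_sets [simp]: "space (sigma (space M) (rv_sets M I f)) = space M"
  and sets_sigma_rv_sets [simp]: "sets (sigma (space M) (rv_sets M I f)) = sigma_sets (space M) (rv_sets M I f)"
  using rv_sets_subset_Pow[of M I f] by simp_all

lemma rv_sets_cong: "(\<And>i. i \<in> I \<Longrightarrow> f i = g i) \<Longrightarrow> rv_sets M I f = rv_sets M I g"
  by (simp add: rv_sets_def)

lemma measurable_sigma_rv_sets:
  assumes "i \<in> I"
  shows "f i \<in> borel_measurable (sigma (space M) (rv_sets M I f))"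
proof (rule measurableI)
  fix A :: "real set" assume "A \<in> sets borel"
  then have "f i -` A \<inter> space M \<in> rv_sets M I f" using assms by (auto simp: rv_sets_def)
  then show "f i -` A \<inter> space (sigma (space M) (rv_sets M I f)) \<in> sets (sigma (space M) (rv_sets M I f))"
    by (auto intro: sigma_sets.Basic)
qed simp

lemma vimage_sets_subset_sigma_rv_sets:
  assumes "g \<in> borel_measurable (sigma (space M) (rv_sets M I f))"
  shows "{g -` B \<inter> space M | B. B \<in> sets borel} \<subseteq> sigma_sets (space M) (rv_sets M I f)"
  using measurable_sets[OF assms] by auto

lemma rv_sets_subset_sigma_sets_orthants:
  assumes "finite I"
  shows "rv_sets M I V \<subseteq> sigma_sets (space M) (range (\<lambda>c. {\<omega>\<in>space M. \<forall>a\<in>I. V a \<omega> \<le> c a}))"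
    (is "_ \<subseteq> sigma_sets _ ?G")
proof
  fix A assume "A \<in> rv_sets M I V"
  then obtain a B where a: "a \<in> I" and B: "B \<in> sets borel" and A: "A = V a -` B \<inter> space M"
    by (auto simp: rv_sets_def)
  have "?G \<subseteq> Pow (space M)" by auto
  then have space: "space (sigma (space M) ?G) = space M"
    and sets: "sets (sigma (space M) ?G) = sigma_sets (space M) ?G" by simp_all
  have "V a \<in> borel_measurable (sigma (space M) ?G)"
  proof (rule borel_measurableI_le)
    fix y
    have "{\<omega>\<in>space M. V a \<omega> \<le> y} = (\<Union>j::nat. {\<omega>\<in>space M. \<forall>b\<in>I. V b \<omega> \<le> (if b = a then y else real j)})"
    proof safe
      fix \<omega> assume \<omega>: "\<omega> \<in> space M" "V a \<omega> \<le> y"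
      obtain j :: nat where j: "(\<Sum>b\<in>I. \<bar>V b \<omega>\<bar>) \<le> real j" using real_arch_simple by blast
      have "V b \<omega> \<le> real j" if "b \<in> I" for b
        using member_le_sum[OF that _ assms, of "\<lambda>b. \<bar>V b \<omega>\<bar>"] j by auto
      then show "\<omega> \<in> (\<Union>j::nat. {\<omega>\<in>space M. \<forall>b\<in>I. V b \<omega> \<le> (if b = a then y else real j)})"
        using \<omega> by auto
    qed (use a in force)+
    also have "\<dots> \<in> sigma_sets (space M) ?G"
      by (intro sigma_sets.Union sigma_sets.Basic rangeI)
    finally show "{\<omega> \<in> space (sigma (space M) ?G). V a \<omega> \<le> y} \<in> sets (sigma (space M) ?G)"
      unfolding space sets .
  qed
  from measurable_sets[OF this B] show "A \<in> sigma_sets (space M) ?G" unfolding A space sets .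
qed

section \<open>Orthogonality to characters and to generated events\<close>

inductive trig_poly :: "'i set \<Rightarrow> (('i \<Rightarrow> real) \<Rightarrow> real) \<Rightarrow> bool" for I where
  cos: "trig_poly I (\<lambda>x. cos (\<Sum>a\<in>I. s a * x a))"
| sin: "trig_poly I (\<lambda>x. sin (\<Sum>a\<in>I. s a * x a))"
| add: "trig_poly I f \<Longrightarrow> trig_poly I g \<Longrightarrow> trig_poly I (\<lambda>x. f x + g x)"
| scale: "trig_poly I f \<Longrightarrow> trig_poly I (\<lambda>x. c * f x)"

lemma trig_poly_diff: "trig_poly I f \<Longrightarrow> trig_poly I g \<Longrightarrow> trig_poly I (\<lambda>x. f x - g x)"
  using trig_poly.add[of I f "\<lambda>x. -1 * g x"] trig_poly.scale[of I g "-1"] by simp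

lemma trig_poly_half: "trig_poly I f \<Longrightarrow> trig_poly I (\<lambda>x. f x / 2)"
  using trig_poly.scale[of I f "1/2"] by simp

lemma trig_poly_const: "trig_poly I (\<lambda>x. c)"
  using trig_poly.scale[OF trig_poly.cos[of I "\<lambda>_. 0"], of c] by simp

lemma trig_poly_mult_basic:
  shows "trig_poly I (\<lambda>x. cos (\<Sum>a\<in>I. s a * x a) * cos (\<Sum>a\<in>I. t a * x a))"
    and "trig_poly I (\<lambda>x. cos (\<Sum>a\<in>I. s a * x a) * sin (\<Sum>a\<in>I. t a * x a))"
    and "trig_poly I (\<lambda>x. sin (\<Sum>a\<in>I. s a * x a) * cos (\<Sum>a\<in>I. t a * x a))"
    and "trig_poly I (\<lambda>x. sin (\<Sum>a\<in>I. s a * x a) * sin (\<Sum>a\<in>I. t a * x a))"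
proof -
  have lin_add: "(\<Sum>a\<in>I. s a * x a) + (\<Sum>a\<in>I. t a * x a) = (\<Sum>a\<in>I. (s a + t a) * x a)"
    for s t x :: "_ \<Rightarrow> real" by (simp add: sum.distrib distrib_right)
  have lin_diff: "(\<Sum>a\<in>I. s a * x a) - (\<Sum>a\<in>I. t a * x a) = (\<Sum>a\<in>I. (s a - t a) * x a)"
    for s t x :: "_ \<Rightarrow> real" by (simp add: sum_subtractf left_diff_distrib)
  show "trig_poly I (\<lambda>x. cos (\<Sum>a\<in>I. s a * x a) * cos (\<Sum>a\<in>I. t a * x a))"
    and "trig_poly I (\<lambda>x. cos (\<Sum>a\<in>I. s a * x a) * sin (\<Sum>a\<in>I. t a * x a))"
    and "trig_poly I (\<lambda>x. sin (\<Sum>a\<in>I. s a * x a) * cos (\<Sum>a\<in>I. t a * x a))"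
    and "trig_poly I (\<lambda>x. sin (\<Sum>a\<in>I. s a * x a) * sin (\<Sum>a\<in>I. t a * x a))"
    unfolding cos_times_cos cos_times_sin sin_times_cos sin_times_sin lin_add lin_diff
    by (intro trig_poly_half trig_poly.add trig_poly_diff trig_poly.cos trig_poly.sin)+
qed

lemma trig_poly_mult_cos_sin:
  assumes "trig_poly I g"
  shows "trig_poly I (\<lambda>x. cos (\<Sum>a\<in>I. s a * x a) * g x)"
    and "trig_poly I (\<lambda>x. sin (\<Sum>a\<in>I. s a * x a) * g x)"
  using assms
proof (induction rule: trig_poly.induct)
  case (add f g)
  { case 1 show ?case using trig_poly.add[OF add.IH(1,3)] by (simp add: distrib_left)
  next
    case 2 show ?case using trig_poly.add[OF add.IH(2,4)] by (simp add: distrib_left) }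
next
  case (scale f c)
  { case 1 show ?case using trig_poly.scale[OF scale.IH(1), of c] by (simp add: ac_simps)
  next
    case 2 show ?case using trig_poly.scale[OF scale.IH(2), of c] by (simp add: ac_simps) }
qed (rule trig_poly_mult_basic)+

lemma trig_poly_mult: "trig_poly I f \<Longrightarrow> trig_poly I g \<Longrightarrow> trig_poly I (\<lambda>x. f x * g x)"
proof (induction rule: trig_poly.induct)
  case (add f h)
  then show ?case using trig_poly.add[OF add.IH] by (simp add: distrib_right)
next
  case (scale f c)
  then show ?case using trig_poly.scale[OF scale.IH, of c] by (simp add: ac_simps)
qed (auto intro: trig_poly_mult_cos_sin)

lemma trig_poly_prod:
  "finite J \<Longrightarrow> (\<And>a. a \<in> J \<Longrightarrow> trig_poly I (f a)) \<Longrightarrow> trig_poly I (\<lambda>x. \<Prod>a\<in>J. f a x)"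
  by (induction J rule: finite_induct) (simp_all add: trig_poly_const trig_poly_mult)

lemma trig_poly_polynomial_comp:
  assumes "real_polynomial_function p" "trig_poly I g"
  shows "trig_poly I (\<lambda>x. p (g x))"
  using assms(1)
proof (induction rule: real_polynomial_function.induct)
  case (linear f)
  then obtain c where "f = (\<lambda>x. x * c)" by (auto simp: real_bounded_linear)
  then show ?case using trig_poly.scale[OF assms(2), of c] by (simp add: ac_simps)
qed (auto intro: trig_poly_const trig_poly.add trig_poly_mult)

lemma trig_poly_sin_coordinate:
  assumes "a \<in> I" "finite I"
  shows "trig_poly I (\<lambda>x. sin (x a / k))"
proof -
  have "(\<Sum>b\<in>I. (if b = a then 1/k else 0) * x b) = x a / k" for x
    using assms by (simp add: if_distrib[of "\<lambda>y. y * _"] cong: if_cong)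
  then show ?thesis using trig_poly.sin[of I "\<lambda>b. if b = a then 1/k else 0"] by simp
qed

lemma trig_poly_bounded: "trig_poly I f \<Longrightarrow> \<exists>B. \<forall>x. \<bar>f x\<bar> \<le> B"
proof (induction rule: trig_poly.induct)
  case (add f g)
  then obtain B1 B2 where "\<forall>x. \<bar>f x\<bar> \<le> B1" "\<forall>x. \<bar>g x\<bar> \<le> B2" by auto
  then have "\<bar>f x + g x\<bar> \<le> B1 + B2" for x by (meson abs_triangle_ineq add_mono order_trans)
  then show ?case by blast
next
  case (scale f c)
  then obtain B where "\<forall>x. \<bar>f x\<bar> \<le> B" by auto
  then have "\<bar>c * f x\<bar> \<le> \<bar>c\<bar> * B" for x by (simp add: abs_mult mult_left_mono)
  then show ?case by blast
qed (auto intro: exI[of _ 1])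

lemma integrable_mult_bounded:
  fixes Z g :: "'a \<Rightarrow> real"
  assumes "integrable M Z" "g \<in> borel_measurable M" "\<And>\<omega>. \<omega> \<in> space M \<Longrightarrow> \<bar>g \<omega>\<bar> \<le> B"
  shows "integrable M (\<lambda>\<omega>. Z \<omega> * g \<omega>)"
proof (rule Bochner_Integration.integrable_bound[where f="\<lambda>\<omega>. B * Z \<omega>"])
  show "integrable M (\<lambda>\<omega>. B * Z \<omega>)" using assms(1) by simp
  show "(\<lambda>\<omega>. Z \<omega> * g \<omega>) \<in> borel_measurable M" using assms(1,2) by auto
  show "AE \<omega> in M. norm (Z \<omega> * g \<omega>) \<le> norm (B * Z \<omega>)"
  proof (rule AE_I2)
    fix \<omega> assume "\<omega> \<in> space M"
    then have "\<bar>Z \<omega>\<bar> * \<bar>g \<omega>\<bar> \<le> \<bar>Z \<omega>\<bar> * \<bar>B\<bar>"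
      using assms(3) by (intro mult_left_mono) force+
    then show "norm (Z \<omega> * g \<omega>) \<le> norm (B * Z \<omega>)" by (simp add: abs_mult ac_simps)
  qed
qed

lemma integral_mult_limit_eq_0:
  fixes Z g :: "'a \<Rightarrow> real" and s :: "nat \<Rightarrow> 'a \<Rightarrow> real"
  assumes Z: "integrable M Z" and s: "\<And>n. s n \<in> borel_measurable M" and g: "g \<in> borel_measurable M"
    and bounded: "\<And>n \<omega>. \<omega> \<in> space M \<Longrightarrow> \<bar>s n \<omega>\<bar> \<le> B"
    and limit: "\<And>\<omega>. \<omega> \<in> space M \<Longrightarrow> (\<lambda>n. s n \<omega>) \<longlonglongrightarrow> g \<omega>"
    and zero: "\<And>n. (\<integral>\<omega>. Z \<omega> * s n \<omega> \<partial>M) = 0"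
  shows "(\<integral>\<omega>. Z \<omega> * g \<omega> \<partial>M) = 0"
proof -
  have "(\<lambda>n. \<integral>\<omega>. Z \<omega> * s n \<omega> \<partial>M) \<longlonglongrightarrow> (\<integral>\<omega>. Z \<omega> * g \<omega> \<partial>M)"
  proof (rule integral_dominated_convergence[where w="\<lambda>\<omega>. \<bar>B\<bar> * \<bar>Z \<omega>\<bar>"])
    show "AE \<omega> in M. norm (Z \<omega> * s n \<omega>) \<le> \<bar>B\<bar> * \<bar>Z \<omega>\<bar>" for n
    proof (rule AE_I2)
      fix \<omega> assume "\<omega> \<in> space M"
      then have "\<bar>Z \<omega>\<bar> * \<bar>s n \<omega>\<bar> \<le> \<bar>Z \<omega>\<bar> * \<bar>B\<bar>"
        using bounded[of \<omega> n] by (intro mult_left_mono) auto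
      then show "norm (Z \<omega> * s n \<omega>) \<le> \<bar>B\<bar> * \<bar>Z \<omega>\<bar>" by (simp add: abs_mult ac_simps)
    qed
  qed (use Z s g limit in \<open>auto intro!: AE_I2 tendsto_mult_left\<close>)
  then show ?thesis using zero by (simp add: LIMSEQ_const_iff)
qed

lemma integral_indicator_mult_eq_0_sigma_sets:
  fixes Z :: "'a \<Rightarrow> real"
  assumes G: "Int_stable G" "G \<subseteq> sets M" and Z: "integrable M Z" "(\<integral>\<omega>. Z \<omega> \<partial>M) = 0"
    and basic: "\<And>X. X \<in> G \<Longrightarrow> (\<integral>\<omega>. indicator X \<omega> * Z \<omega> \<partial>M) = 0"
    and A: "A \<in> sigma_sets (space M) G"
  shows "(\<integral>\<omega>. indicator A \<omega> * Z \<omega> \<partial>M) = 0"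
proof -
  have sigma_G: "sigma_sets (space M) G \<subseteq> sets M"
    using sets.sigma_sets_subset[OF G(2)] .
  have "G \<subseteq> Pow (space M)" using G(2) sets.sets_into_space by auto
  from G(1) this A show ?thesis
  proof (induction rule: sigma_sets_induct_disjoint)
    case (compl X)
    have X: "X \<in> sets M" using compl.hyps sigma_G by auto
    have "(\<integral>\<omega>. indicator (space M - X) \<omega> * Z \<omega> \<partial>M) = (\<integral>\<omega>. Z \<omega> - indicator X \<omega> * Z \<omega> \<partial>M)"
      by (rule Bochner_Integration.integral_cong) (auto simp: indicator_def)
    also have "\<dots> = 0"
      using Z integrable_mult_indicator[OF X Z(1)] compl.IH by simp
    finally show ?case .
  next
    case (union F)
    have F: "F i \<in> sets M" for i using union.hyps(2) sigma_G by auto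
    have "(LINT x:(\<Union>i. F i)|M. Z x) = (\<Sum>i. (LINT x:(F i)|M. Z x))"
    proof (rule lebesgue_integral_countable_add)
      show "F i \<inter> F j = {}" if "i \<noteq> j" for i j
        using union.hyps(1) that by (auto simp: disjoint_family_on_def)
      show "set_integrable M (\<Union>i. F i) Z"
        unfolding set_integrable_def using Z F by (intro integrable_mult_indicator) auto
    qed (rule F)
    then show ?case using union.IH by (simp add: set_lebesgue_integral_def)
  qed (use basic in auto)
qed

lemma polynomial_approximations_unit_interval:
  fixes g :: "'i \<Rightarrow> real \<Rightarrow> real"
  assumes "\<And>a. continuous_on {-1..1} (g a)"
  obtains P where "\<And>a n. real_polynomial_function (P a n)"
    and "\<And>a n y. y \<in> {-1..1} \<Longrightarrow> \<bar>g a y - P a n y\<bar> < 1 / real (Suc n)"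
proof -
  have "\<exists>p. real_polynomial_function p \<and> (\<forall>y\<in>{-1..1}. \<bar>g a y - p y\<bar> < 1 / real (Suc n))" for a n
    using Stone_Weierstrass_real_polynomial_function[OF compact_Icc assms[of a], of "1 / real (Suc n)"]
    by (metis of_nat_0_less_iff zero_less_Suc zero_less_divide_1_iff)
  then show ?thesis using that by metis
qed

context
  fixes M :: "'a measure" and I :: "'i set" and V :: "'i \<Rightarrow> 'a \<Rightarrow> real" and Z :: "'a \<Rightarrow> real"
  assumes finite_I: "finite I"
    and V_measurable: "\<And>a. a \<in> I \<Longrightarrow> V a \<in> borel_measurable M"
    and Z_integrable: "integrable M Z"
    and Z_cos: "\<And>s. (\<integral>\<omega>. Z \<omega> * cos (\<Sum>a\<in>I. s a * V a \<omega>) \<partial>M) = 0"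
    and Z_sin: "\<And>s. (\<integral>\<omega>. Z \<omega> * sin (\<Sum>a\<in>I. s a * V a \<omega>) \<partial>M) = 0"
begin

lemma measurable_trig_poly_comp: "trig_poly I f \<Longrightarrow> (\<lambda>\<omega>. f (\<lambda>a. V a \<omega>)) \<in> borel_measurable M"
proof (induction rule: trig_poly.induct)
  have lin: "(\<lambda>\<omega>. \<Sum>a\<in>I. s a * V a \<omega>) \<in> borel_measurable M" for s
    using V_measurable by auto
  { case (cos s) show ?case using lin[of s] by measurable
  next
    case (sin s) show ?case using lin[of s] by measurable }
qed auto

lemma integral_mult_trig_poly_eq_0: "trig_poly I f \<Longrightarrow> (\<integral>\<omega>. Z \<omega> * f (\<lambda>a. V a \<omega>) \<partial>M) = 0"
proof (induction rule: trig_poly.induct)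
  case (add f g)
  have "integrable M (\<lambda>\<omega>. Z \<omega> * h (\<lambda>a. V a \<omega>))" if "trig_poly I h" for h
    using trig_poly_bounded[OF that] measurable_trig_poly_comp[OF that]
    by (auto intro: integrable_mult_bounded[OF Z_integrable])
  then show ?case using add by (simp add: distrib_left)
qed (simp_all add: Z_cos Z_sin ac_simps)

text \<open>Polynomials in \<open>sin (x a / k)\<close> are trigonometric polynomials, so Weierstrass approximation on
  \<open>[-1, 1]\<close> reaches every continuous function of \<open>sin (x a / k)\<close>; in the next lemma
  \<open>k sin (y / k) \<longlonglongrightarrow> y\<close> removes the sine.\<close>

lemma integral_mult_prod_sin_eq_0:
  assumes g_cont: "\<And>a. continuous_on UNIV (g a)" and g_bounded: "\<And>a y. \<bar>g a y\<bar> \<le> 1"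
  shows "(\<integral>\<omega>. Z \<omega> * (\<Prod>a\<in>I. g a (sin (V a \<omega> / k))) \<partial>M) = 0"
proof -
  obtain P where P_poly: "\<And>a n. real_polynomial_function (P a n)"
    and P_approx: "\<And>a n y. y \<in> {-1..1} \<Longrightarrow> \<bar>g a y - P a n y\<bar> < 1 / real (Suc n)"
    using polynomial_approximations_unit_interval[of g] continuous_on_subset[OF g_cont] by blast
  define y where "y a \<omega> = sin (V a \<omega> / k)" for a \<omega>
  have y_range: "y a \<omega> \<in> {-1..1}" for a \<omega> by (simp add: y_def)
  have y_measurable: "(\<lambda>\<omega>. y a \<omega>) \<in> borel_measurable M" if "a \<in> I" for a
    using V_measurable[OF that] unfolding y_def by measurable
  have P_bounded: "\<bar>P a n (y a \<omega>)\<bar> \<le> 2" for a n \<omega>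
  proof -
    have "\<bar>g a (y a \<omega>) - P a n (y a \<omega>)\<bar> < 1 / real (Suc n)"
      using P_approx y_range by blast
    moreover have "1 / real (Suc n) \<le> 1" by simp
    ultimately show ?thesis using g_bounded[of a "y a \<omega>"] by linarith
  qed
  have "(\<integral>\<omega>. Z \<omega> * (\<Prod>a\<in>I. g a (y a \<omega>)) \<partial>M) = 0"
  proof (rule integral_mult_limit_eq_0[OF Z_integrable, where B = "2 ^ card I"
        and s = "\<lambda>n \<omega>. \<Prod>a\<in>I. P a n (y a \<omega>)"])
    show "(\<lambda>\<omega>. \<Prod>a\<in>I. P a n (y a \<omega>)) \<in> borel_measurable M" for n
      using borel_measurable_continuous_on[OF continuous_on_polymonial_function y_measurable]
        P_poly[unfolded real_polynomial_function_eq] by (intro borel_measurable_prod) auto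
    show "(\<lambda>\<omega>. \<Prod>a\<in>I. g a (y a \<omega>)) \<in> borel_measurable M"
      using borel_measurable_continuous_on[OF g_cont y_measurable] by (intro borel_measurable_prod) auto
    show "\<bar>\<Prod>a\<in>I. P a n (y a \<omega>)\<bar> \<le> 2 ^ card I" for n \<omega>
      using prod_mono[of I "\<lambda>a. \<bar>P a n (y a \<omega>)\<bar>" "\<lambda>_. 2"] P_bounded by (simp add: abs_prod)
    show "(\<lambda>n. \<Prod>a\<in>I. P a n (y a \<omega>)) \<longlonglongrightarrow> (\<Prod>a\<in>I. g a (y a \<omega>))" for \<omega>
    proof (intro tendsto_prod)
      fix a
      have "(\<lambda>n. P a n (y a \<omega>) - g a (y a \<omega>)) \<longlonglongrightarrow> 0"
        using P_approx[OF y_range] by (intro LIMSEQ_norm_0) (simp add: abs_minus_commute)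
      then show "(\<lambda>n. P a n (y a \<omega>)) \<longlonglongrightarrow> g a (y a \<omega>)"
        by (simp add: LIM_zero_iff)
    qed
    show "(\<integral>\<omega>. Z \<omega> * (\<Prod>a\<in>I. P a n (y a \<omega>)) \<partial>M) = 0" for n
    proof -
      have "trig_poly I (\<lambda>x. \<Prod>a\<in>I. P a n (sin (x a / k)))"
        using finite_I by (intro trig_poly_prod trig_poly_polynomial_comp[OF P_poly]
            trig_poly_sin_coordinate)
      from integral_mult_trig_poly_eq_0[OF this] show ?thesis unfolding y_def .
    qed
  qed
  then show ?thesis by (simp add: y_def)
qed

lemma integral_mult_prod_continuous_eq_0:
  assumes h_cont: "\<And>a. continuous_on UNIV (h a)" and h_bounded: "\<And>a y. \<bar>h a y\<bar> \<le> 1"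
  shows "(\<integral>\<omega>. Z \<omega> * (\<Prod>a\<in>I. h a (V a \<omega>)) \<partial>M) = 0"
proof (rule integral_mult_limit_eq_0[OF Z_integrable, where B = 1
      and s = "\<lambda>n \<omega>. \<Prod>a\<in>I. h a (real (Suc n) * sin (V a \<omega> / real (Suc n)))"])
  show "(\<lambda>\<omega>. \<Prod>a\<in>I. h a (real (Suc n) * sin (V a \<omega> / real (Suc n)))) \<in> borel_measurable M" for n
  proof -
    have "(\<lambda>\<omega>. real (Suc n) * sin (V a \<omega> / real (Suc n))) \<in> borel_measurable M" if "a \<in> I" for a
      using V_measurable[OF that] by measurable
    from borel_measurable_continuous_on[OF h_cont this] show ?thesis by (rule borel_measurable_prod)
  qed
  show "(\<lambda>\<omega>. \<Prod>a\<in>I. h a (V a \<omega>)) \<in> borel_measurable M"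
    using borel_measurable_continuous_on[OF h_cont V_measurable] by (intro borel_measurable_prod)
  show "\<bar>\<Prod>a\<in>I. h a (real (Suc n) * sin (V a \<omega> / real (Suc n)))\<bar> \<le> 1" for n \<omega>
    using prod_mono[of I "\<lambda>a. \<bar>h a (real (Suc n) * sin (V a \<omega> / real (Suc n)))\<bar>" "\<lambda>_. 1"] h_bounded
    by (simp add: abs_prod)
  show "(\<lambda>n. \<Prod>a\<in>I. h a (real (Suc n) * sin (V a \<omega> / real (Suc n)))) \<longlonglongrightarrow> (\<Prod>a\<in>I. h a (V a \<omega>))"
    for \<omega>
  proof (intro tendsto_prod)
    fix a
    have "(\<lambda>n. real (Suc n) * sin (V a \<omega> / real (Suc n))) \<longlonglongrightarrow> V a \<omega>" by real_asymp
    moreover have "isCont (h a) (V a \<omega>)" using h_cont by (simp add: continuous_on_eq_continuous_at)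
    ultimately show "(\<lambda>n. h a (real (Suc n) * sin (V a \<omega> / real (Suc n)))) \<longlonglongrightarrow> h a (V a \<omega>)"
      by (rule isCont_tendsto_compose[rotated])
  qed
  show "(\<integral>\<omega>. Z \<omega> * (\<Prod>a\<in>I. h a (real (Suc n) * sin (V a \<omega> / real (Suc n)))) \<partial>M) = 0" for n
    by (rule integral_mult_prod_sin_eq_0[of "\<lambda>a y. h a (real (Suc n) * y)"])
      (auto intro!: continuous_intros continuous_on_compose2[OF h_cont] simp: h_bounded)
qed

lemma integral_mult_prod_indicator_atMost_eq_0:
  "(\<integral>\<omega>. Z \<omega> * (\<Prod>a\<in>I. indicator {..c a} (V a \<omega>)) \<partial>M) = 0"
proof -
  define h where "h j a y = max 0 (min 1 (1 - real j * (y - c a)))" for j a and y :: real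
  have h_cont: "continuous_on UNIV (h j a)" for j a unfolding h_def by (intro continuous_intros)
  have h_limit: "(\<lambda>j. h j a y) \<longlonglongrightarrow> indicator {..c a} y" for a y
  proof (cases "y \<le> c a")
    case True
    then have "h j a y = 1" for j unfolding h_def by (auto simp: mult_nonneg_nonpos)
    then show ?thesis using True by simp
  next
    case False
    obtain N :: nat where N: "1 / (y - c a) < N" using reals_Archimedean2 by blast
    have "1 < real j * (y - c a)" if "N \<le> j" for j
    proof -
      have "1 < real N * (y - c a)" using N False by (simp add: divide_less_eq)
      also have "\<dots> \<le> real j * (y - c a)" using that False by (intro mult_right_mono) auto
      finally show ?thesis .
    qed
    then have "eventually (\<lambda>j. h j a y = 0) sequentially"
      unfolding eventually_sequentially h_def by force
    then show ?thesis using False by (simp add: tendsto_eventually)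
  qed
  show ?thesis
  proof (rule integral_mult_limit_eq_0[OF Z_integrable, where B = 1
        and s = "\<lambda>j \<omega>. \<Prod>a\<in>I. h j a (V a \<omega>)"])
    show "(\<lambda>\<omega>. \<Prod>a\<in>I. h j a (V a \<omega>)) \<in> borel_measurable M" for j
      using borel_measurable_continuous_on[OF h_cont V_measurable] by (intro borel_measurable_prod)
    show "(\<lambda>\<omega>. \<Prod>a\<in>I. indicator {..c a} (V a \<omega>) :: real) \<in> borel_measurable M"
      using V_measurable by (intro borel_measurable_prod) measurable
    show "\<bar>\<Prod>a\<in>I. h j a (V a \<omega>)\<bar> \<le> 1" for j \<omega>
      by (auto simp: h_def abs_prod intro!: prod_le_1)
    show "(\<integral>\<omega>. Z \<omega> * (\<Prod>a\<in>I. h j a (V a \<omega>)) \<partial>M) = 0" for j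
      using h_cont by (rule integral_mult_prod_continuous_eq_0) (auto simp: h_def)
  qed (use h_limit in \<open>auto intro: tendsto_prod\<close>)
qed

lemma set_integral_eq_0_sigma_rv_sets:
  assumes "A \<in> sigma_sets (space M) (rv_sets M I V)"
  shows "(\<integral>\<omega>\<in>A. Z \<omega> \<partial>M) = 0"
proof -
  define orthant where "orthant c = {\<omega>\<in>space M. \<forall>a\<in>I. V a \<omega> \<le> c a}" for c
  have stable: "Int_stable (range orthant)"
  proof (rule Int_stableI)
    fix X Y assume "X \<in> range orthant" "Y \<in> range orthant"
    then obtain c d where "X = orthant c" "Y = orthant d" by auto
    then have "X \<inter> Y = orthant (\<lambda>a. min (c a) (d a))" by (auto simp: orthant_def)
    then show "X \<inter> Y \<in> range orthant" by simp
  qed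
  moreover have sets: "range orthant \<subseteq> sets M"
    using V_measurable finite_I unfolding orthant_def by (auto intro!: sets.sets_Collect_finite_All)
  moreover have "(\<integral>\<omega>. indicator (orthant c) \<omega> * Z \<omega> \<partial>M) = 0" for c
  proof -
    have "indicator (orthant c) \<omega> = (\<Prod>a\<in>I. indicator {..c a} (V a \<omega>) :: real)" if "\<omega> \<in> space M" for \<omega>
      using that finite_I by (auto simp: orthant_def indicator_def prod_zero_iff)
    then have "(\<integral>\<omega>. indicator (orthant c) \<omega> * Z \<omega> \<partial>M) = (\<integral>\<omega>. Z \<omega> * (\<Prod>a\<in>I. indicator {..c a} (V a \<omega>)) \<partial>M)"
      by (intro Bochner_Integration.integral_cong) simp_all
    then show ?thesis using integral_mult_prod_indicator_atMost_eq_0 by simp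
  qed
  moreover have A: "A \<in> sigma_sets (space M) (range orthant)"
    using sigma_sets_mono[OF rv_sets_subset_sigma_sets_orthants[OF finite_I]] assms
    unfolding orthant_def by blast
  ultimately have "(\<integral>\<omega>. indicator A \<omega> * Z \<omega> \<partial>M) = 0"
    using Z_cos[of "\<lambda>_. 0"]
    by (intro integral_indicator_mult_eq_0_sigma_sets[OF stable sets Z_integrable _ _ A]) auto
  then show ?thesis by (simp add: set_lebesgue_integral_def)
qed

end

section \<open>Centered normal random variables\<close>

definition centered_normal :: "'a measure \<Rightarrow> ('a \<Rightarrow> real) \<Rightarrow> real \<Rightarrow> bool" where
  "centered_normal M Y v \<longleftrightarrow> v \<ge> 0 \<and> Y \<in> borel_measurable M \<and>
     (v > 0 \<longrightarrow> distributed M lborel Y (normal_density 0 (sqrt v))) \<and>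
     (v = 0 \<longrightarrow> (AE \<omega> in M. Y \<omega> = 0))"

lemma distributed_AE_cong:
  assumes "distributed M N X f" "AE x in M. X x = Y x" "Y \<in> measurable M N"
  shows "distributed M N Y f"
proof -
  have "distr M N X = distr M N Y"
    using assms distributed_measurable[OF assms(1)] by (intro distr_cong_AE) auto
  then show ?thesis using assms unfolding distributed_def by simp
qed

context prob_space
begin

lemma centered_normal_cos_sin:
  assumes "centered_normal M Y v"
  shows "(\<integral>\<omega>. cos (Y \<omega>) \<partial>M) = exp (- v / 2)" and "(\<integral>\<omega>. sin (Y \<omega>) \<partial>M) = 0"
proof -
  have Y: "Y \<in> borel_measurable M" using assms by (simp add: centered_normal_def)
  have "(\<integral>\<omega>. cos (Y \<omega>) \<partial>M) = exp (- v / 2) \<and> (\<integral>\<omega>. sin (Y \<omega>) \<partial>M) = 0"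
  proof (cases "v > 0")
    case True
    define \<sigma> where "\<sigma> = sqrt v"
    have \<sigma>: "\<sigma> > 0" "\<sigma>\<^sup>2 = v" using True by (simp_all add: \<sigma>_def)
    define W where "W \<omega> = Y \<omega> / \<sigma>" for \<omega>
    have W: "distributed M lborel W std_normal_density"
      using assms True normal_standard_normal_convert[OF \<sigma>(1), of Y 0]
      by (simp add: centered_normal_def W_def[abs_def] \<sigma>_def)
    have "(\<integral>\<omega>. iexp (\<sigma> * W \<omega>) \<partial>M) = integral\<^sup>L (distr M lborel W) (\<lambda>x. iexp (\<sigma> * x))"
      using distributed_measurable[OF W] by (subst integral_distr) auto
    also have "\<dots> = char std_normal_distribution \<sigma>"
      using distributed_distr_eq_density[OF W] by (simp add: char_def)
    also have "\<dots> = exp (- v / 2)"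
      using \<sigma> by (simp add: char_std_normal_distribution)
    finally have char: "(\<integral>\<omega>. iexp (Y \<omega>) \<partial>M) = exp (- v / 2)"
      using \<sigma> by (simp add: W_def)
    have iexp_integrable: "integrable M (\<lambda>\<omega>. iexp (Y \<omega>))"
      using integrable_iexp[of "\<lambda>\<omega>. complex_of_real (Y \<omega>)"] Y by simp
    have "(\<integral>\<omega>. cos (Y \<omega>) \<partial>M) = Re (\<integral>\<omega>. iexp (Y \<omega>) \<partial>M)"
      "(\<integral>\<omega>. sin (Y \<omega>) \<partial>M) = Im (\<integral>\<omega>. iexp (Y \<omega>) \<partial>M)"
      using integral_bounded_linear[OF bounded_linear_Re iexp_integrable]
        integral_bounded_linear[OF bounded_linear_Im iexp_integrable]
      by (simp_all add: Re_exp Im_exp)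
    then show ?thesis using char by simp
  next
    case False
    then have zero: "AE \<omega> in M. Y \<omega> = 0" using assms by (simp add: centered_normal_def)
    have "(\<integral>\<omega>. cos (Y \<omega>) \<partial>M) = (\<integral>\<omega>. 1 \<partial>M)"
      using Y zero by (intro integral_cong_AE) (auto elim: AE_mp)
    moreover have "(\<integral>\<omega>. sin (Y \<omega>) \<partial>M) = (\<integral>\<omega>. 0 \<partial>M)"
      using Y zero by (intro integral_cong_AE) (auto elim: AE_mp)
    ultimately
    show ?thesis using False assms by (simp add: centered_normal_def prob_space)
  qed
  then show "(\<integral>\<omega>. cos (Y \<omega>) \<partial>M) = exp (- v / 2)" "(\<integral>\<omega>. sin (Y \<omega>) \<partial>M) = 0" by simp_all
qed

lemma centered_normal_second_moment:
  assumes "centered_normal M Y v"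
  shows "integrable M (\<lambda>\<omega>. (Y \<omega>)\<^sup>2)" and "(\<integral>\<omega>. (Y \<omega>)\<^sup>2 \<partial>M) = v"
proof -
  have Y: "Y \<in> borel_measurable M" using assms by (simp add: centered_normal_def)
  have "integrable M (\<lambda>\<omega>. (Y \<omega>)\<^sup>2) \<and> (\<integral>\<omega>. (Y \<omega>)\<^sup>2 \<partial>M) = v"
  proof (cases "v > 0")
    case True
    then have D: "distributed M lborel Y (normal_density 0 (sqrt v))"
      using assms by (simp add: centered_normal_def)
    have "integrable lborel (\<lambda>x. normal_density 0 (sqrt v) x * (x - 0)\<^sup>2)"
      using True by (intro integrable_normal_moment) simp
    then have "integrable M (\<lambda>\<omega>. (Y \<omega>)\<^sup>2)"
      using distributed_integrable[OF D, of "\<lambda>x. x\<^sup>2"] by simp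
    moreover have "(\<integral>x. normal_density 0 (sqrt v) x * x\<^sup>2 \<partial>lborel) = (\<integral>\<omega>. (Y \<omega>)\<^sup>2 \<partial>M)"
      by (rule distributed_integral[OF D]) auto
    moreover have "(\<integral>x. normal_density 0 (sqrt v) x * x\<^sup>2 \<partial>lborel) = v"
      using integral_normal_moment_even[where \<mu>=0 and \<sigma>="sqrt v" and k=1] True by simp
    ultimately show ?thesis by simp
  next
    case False
    then have "AE \<omega> in M. Y \<omega> = 0" using assms by (simp add: centered_normal_def)
    then have zero: "AE \<omega> in M. (Y \<omega>)\<^sup>2 = 0" by (auto elim: AE_mp)
    have "integrable M (\<lambda>\<omega>. (Y \<omega>)\<^sup>2) = integrable M (\<lambda>\<omega>. 0::real)"
      using Y zero by (intro integrable_cong_AE) auto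
    moreover have "(\<integral>\<omega>. (Y \<omega>)\<^sup>2 \<partial>M) = (\<integral>\<omega>. 0 \<partial>M)"
      using Y zero by (intro integral_cong_AE) auto
    ultimately
    show ?thesis using False assms by (simp add: centered_normal_def)
  qed
  then show "integrable M (\<lambda>\<omega>. (Y \<omega>)\<^sup>2)" "(\<integral>\<omega>. (Y \<omega>)\<^sup>2 \<partial>M) = v" by simp_all
qed

lemma centered_normal_scale:
  assumes "distributed M lborel Y (normal_density 0 1)"
  shows "centered_normal M (\<lambda>\<omega>. c * Y \<omega>) (c\<^sup>2)"
  using normal_density_affine[OF assms, of c 0] distributed_measurable[OF assms]
  by (auto simp: centered_normal_def)

lemma centered_normal_sum:
  assumes K: "finite K" and indep: "indep_vars (\<lambda>_. borel) Y K"
    and normal: "\<And>k. k \<in> K \<Longrightarrow> centered_normal M (Y k) (v k)"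
  shows "centered_normal M (\<lambda>\<omega>. \<Sum>k\<in>K. Y k \<omega>) (\<Sum>k\<in>K. v k)"
proof -
  define K' where "K' = {k\<in>K. v k > 0}"
  have K': "finite K'" "K' \<subseteq> K" using K by (auto simp: K'_def)
  have v_zero: "v k = 0" if "k \<in> K - K'" for k
    using normal that by (force simp: K'_def centered_normal_def)
  then have v_sum: "(\<Sum>k\<in>K. v k) = (\<Sum>k\<in>K'. v k)"
    using K by (intro sum.mono_neutral_right) (auto simp: K'_def)
  have "AE \<omega> in M. \<forall>k\<in>K - K'. Y k \<omega> = 0"
    using K normal v_zero by (intro AE_finite_allI) (auto simp: centered_normal_def)
  then have Y_sum: "AE \<omega> in M. (\<Sum>k\<in>K'. Y k \<omega>) = (\<Sum>k\<in>K. Y k \<omega>)"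
    by eventually_elim (use K K'(2) in \<open>auto intro: sum.mono_neutral_left\<close>)
  have measurable: "(\<lambda>\<omega>. \<Sum>k\<in>K. Y k \<omega>) \<in> borel_measurable M"
    using normal by (intro borel_measurable_sum) (simp add: centered_normal_def)
  show ?thesis
  proof (cases "K' = {}")
    case True
    then show ?thesis using Y_sum measurable v_sum by (simp add: centered_normal_def)
  next
    case False
    have "distributed M lborel (\<lambda>\<omega>. \<Sum>k\<in>K'. Y k \<omega>)
        (normal_density (\<Sum>k\<in>K'. 0) (sqrt (\<Sum>k\<in>K'. (sqrt (v k))\<^sup>2)))"
      using K' normal
      by (intro sum_indep_normal[OF K'(1) False indep_vars_subset[OF indep K'(2)]])
        (auto simp: K'_def centered_normal_def)
    moreover have "(\<Sum>k\<in>K'. (sqrt (v k))\<^sup>2) = (\<Sum>k\<in>K'. v k)"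
      by (intro sum.cong) (auto simp: K'_def)
    ultimately have "distributed M lborel (\<lambda>\<omega>. \<Sum>k\<in>K. Y k \<omega>) (normal_density 0 (sqrt (\<Sum>k\<in>K. v k)))"
      using Y_sum measurable v_sum by (auto elim: distributed_AE_cong)
    moreover have "(\<Sum>k\<in>K'. v k) > 0"
      using K' False by (intro sum_pos) (auto simp: K'_def)
    ultimately show ?thesis using measurable v_sum by (simp add: centered_normal_def)
  qed
qed

end

section \<open>Linear combinations of a Gaussian vector and independent standard normal noise\<close>

lemma cos_sin_second_order_remainder:
  fixes a h :: real
  shows "\<bar>cos (a + h) - cos a - h * - sin a\<bar> \<le> h\<^sup>2 / 2"
    and "\<bar>sin (a + h) - sin a - h * cos a\<bar> \<le> h\<^sup>2 / 2"
proof -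
  have "cmod (cis h - 1 - \<i> * h) \<le> h\<^sup>2 / 2"
    using iexp_approx1[of h 1] by (simp add: cis_conv_exp power2_eq_square diff_diff_eq)
  then have remainder: "cmod (cis a * (cis h - 1 - \<i> * h)) \<le> h\<^sup>2 / 2" by (simp add: norm_mult)
  have "Re (cis a * (cis h - 1 - \<i> * h)) = cos (a + h) - cos a - h * - sin a"
    "Im (cis a * (cis h - 1 - \<i> * h)) = sin (a + h) - sin a - h * cos a"
    by (simp_all add: algebra_simps cos_add sin_add)
  then show "\<bar>cos (a + h) - cos a - h * - sin a\<bar> \<le> h\<^sup>2 / 2"
    and "\<bar>sin (a + h) - sin a - h * cos a\<bar> \<le> h\<^sup>2 / 2"
    using abs_Re_le_cmod abs_Im_le_cmod remainder by (metis order_trans)+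
qed

lemma eq_0_if_abs_le_linear:
  fixes x K :: real
  assumes "\<And>t. t > 0 \<Longrightarrow> \<bar>x\<bar> \<le> t * K"
  shows "x = 0"
proof -
  have "\<bar>x\<bar> \<le> 0"
  proof (rule field_le_epsilon)
    fix \<epsilon> :: real assume "\<epsilon> > 0"
    then have "\<bar>x\<bar> \<le> \<epsilon> / (\<bar>K\<bar> + 1) * K" by (intro assms) simp
    also have "\<dots> \<le> \<epsilon> / (\<bar>K\<bar> + 1) * (\<bar>K\<bar> + 1)"
      using \<open>\<epsilon> > 0\<close> by (intro mult_left_mono) auto
    also have "\<dots> = \<epsilon>" by simp
    finally show "\<bar>x\<bar> \<le> 0 + \<epsilon>" by simp
  qed
  then show ?thesis by simp
qed

text \<open>If \<open>t \<mapsto> E f(W + t R)\<close> is flat to second order at \<open>0\<close>, its derivative \<open>E[R f'(W)]\<close> vanishes.\<close>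

lemma (in prob_space) integral_mult_deriv_eq_0_if_flat:
  fixes f f' :: "real \<Rightarrow> real"
  assumes W: "W \<in> borel_measurable M" and R: "R \<in> borel_measurable M" "integrable M (\<lambda>\<omega>. (R \<omega>)\<^sup>2)"
    and f: "continuous_on UNIV f" "\<And>x. \<bar>f x\<bar> \<le> 1"
    and f': "continuous_on UNIV f'" "\<And>x. \<bar>f' x\<bar> \<le> 1"
    and remainder: "\<And>a h. \<bar>f (a + h) - f a - h * f' a\<bar> \<le> h\<^sup>2 / 2"
    and flat: "\<And>t. t > 0 \<Longrightarrow> \<bar>(\<integral>\<omega>. f (W \<omega> + t * R \<omega>) \<partial>M) - (\<integral>\<omega>. f (W \<omega>) \<partial>M)\<bar> \<le> t\<^sup>2 * K"
  shows "(\<integral>\<omega>. R \<omega> * f' (W \<omega>) \<partial>M) = 0"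
proof -
  define D where "D = (\<integral>\<omega>. R \<omega> * f' (W \<omega>) \<partial>M)"
  define q where "q = (\<integral>\<omega>. (R \<omega>)\<^sup>2 \<partial>M)"
  have f_integrable: "integrable M (\<lambda>\<omega>. f (W \<omega> + t * R \<omega>))" for t
    using f W R by (intro integrable_const_bound[where B = 1]) (auto intro: borel_measurable_continuous_on)
  have Rf'_integrable: "integrable M (\<lambda>\<omega>. R \<omega> * f' (W \<omega>))"
    using square_integrable_imp_integrable[OF R] f' W
    by (intro integrable_mult_bounded[where B = 1]) (auto intro: borel_measurable_continuous_on)
  have bound: "\<bar>D\<bar> \<le> t * (K + q / 2)" if t: "t > 0" for t
  proof -
    define e where "e \<omega> = f (W \<omega> + t * R \<omega>) - f (W \<omega>) - t * R \<omega> * f' (W \<omega>)" for \<omega>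
    have e_integrable: "integrable M e"
      unfolding e_def using f_integrable[of t] f_integrable[of 0] Rf'_integrable by (simp add: mult.assoc)
    have "\<bar>\<integral>\<omega>. e \<omega> \<partial>M\<bar> \<le> (\<integral>\<omega>. \<bar>e \<omega>\<bar> \<partial>M)" by (rule integral_abs_bound)
    also have "\<dots> \<le> (\<integral>\<omega>. t\<^sup>2 * (R \<omega>)\<^sup>2 / 2 \<partial>M)"
      using remainder[of "W \<omega>" "t * R \<omega>" for \<omega>] R(2)
      by (intro integral_mono[OF integrable_abs[OF e_integrable]])
        (auto simp: e_def power_mult_distrib mult.assoc)
    also have "\<dots> = t\<^sup>2 * (q / 2)" by (simp add: q_def)
    finally have "\<bar>\<integral>\<omega>. e \<omega> \<partial>M\<bar> \<le> t\<^sup>2 * (q / 2)" .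
    moreover have "(\<integral>\<omega>. e \<omega> \<partial>M) = (\<integral>\<omega>. f (W \<omega> + t * R \<omega>) \<partial>M) - (\<integral>\<omega>. f (W \<omega>) \<partial>M) - t * D"
      unfolding e_def D_def using f_integrable[of t] f_integrable[of 0] Rf'_integrable
      by (simp add: mult.assoc)
    ultimately have "\<bar>t * D\<bar> \<le> t\<^sup>2 * K + t\<^sup>2 * (q / 2)"
      using flat[OF t] by (simp only: abs_le_iff) linarith
    then have "t * \<bar>D\<bar> \<le> t * (t * (K + q / 2))"
      using t by (simp add: abs_mult power2_eq_square algebra_simps)
    then show ?thesis using t by simp
  qed
  then show ?thesis unfolding D_def by (rule eq_0_if_abs_le_linear)
qed

locale gaussian_linear_model = prob_space +
  fixes I :: "'i set" and X :: "'i \<Rightarrow> 'a \<Rightarrow> real" and C :: "'i \<Rightarrow> 'i \<Rightarrow> real"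
    and J :: "'j set" and N :: "'j \<Rightarrow> 'a \<Rightarrow> real"
  assumes finite_J: "finite J"
    and X_gaussian: "jointly_gaussian M I X (\<lambda>_. 0) C"
    and C_sym: "\<And>i j. C i j = C j i"
    and C_psd: "\<And>c. (\<Sum>i\<in>I. \<Sum>j\<in>I. c i * c j * C i j) \<ge> 0"
    and N_normal: "\<And>S. S \<in> J \<Longrightarrow> distributed M lborel (N S) (normal_density 0 1)"
    and X_N_indep: "indep_sets
           (\<lambda>k. sigma_sets (space M) (case k of None \<Rightarrow> rv_sets M I X | Some S \<Rightarrow> rv_sets M {S} N))
           (insert None (Some ` J))"
begin

text \<open>A linear combination of the \<open>X i\<close> and \<open>N S\<close> is represented by its coefficient vectors
  \<open>(c, d)\<close>; \<open>lin_cov\<close> is the covariance of two such combinations.\<close>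

definition lin_comb :: "('i \<Rightarrow> real) \<Rightarrow> ('j \<Rightarrow> real) \<Rightarrow> 'a \<Rightarrow> real" where
  "lin_comb c d \<omega> = (\<Sum>i\<in>I. c i * X i \<omega>) + (\<Sum>S\<in>J. d S * N S \<omega>)"

definition lin_cov :: "('i \<Rightarrow> real) \<Rightarrow> ('j \<Rightarrow> real) \<Rightarrow> ('i \<Rightarrow> real) \<Rightarrow> ('j \<Rightarrow> real) \<Rightarrow> real" where
  "lin_cov c d c' d' = (\<Sum>i\<in>I. \<Sum>j\<in>I. c i * c' j * C i j) + (\<Sum>S\<in>J. d S * d' S)"

lemma X_measurable: "i \<in> I \<Longrightarrow> X i \<in> borel_measurable M"
  using X_gaussian by (simp add: jointly_gaussian_def)

lemma lin_comb_measurable [measurable]: "lin_comb c d \<in> borel_measurable M"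
  using X_measurable N_normal[THEN distributed_measurable] unfolding lin_comb_def[abs_def] by auto

lemma lin_cov_sym: "lin_cov c d c' d' = lin_cov c' d' c d"
  unfolding lin_cov_def by (subst sum.swap) (auto intro!: sum.cong simp: C_sym ac_simps)

lemma lin_comb_combine:
  "lin_comb (\<lambda>i. a * c1 i + b * c2 i) (\<lambda>S. a * d1 S + b * d2 S) \<omega> = a * lin_comb c1 d1 \<omega> + b * lin_comb c2 d2 \<omega>"
  unfolding lin_comb_def by (simp add: sum_distrib_left sum.distrib algebra_simps)

lemma lin_cov_combine_left:
  "lin_cov (\<lambda>i. a * c1 i + b * c2 i) (\<lambda>S. a * d1 S + b * d2 S) c' d'
     = a * lin_cov c1 d1 c' d' + b * lin_cov c2 d2 c' d'"
  unfolding lin_cov_def by (simp add: sum_distrib_left sum.distrib algebra_simps)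

lemma lin_comb_sum:
  "lin_comb (\<lambda>i. \<Sum>t\<in>T. w t * c t i) (\<lambda>S. \<Sum>t\<in>T. w t * d t S) \<omega> = (\<Sum>t\<in>T. w t * lin_comb (c t) (d t) \<omega>)"
  unfolding lin_comb_def
  by (simp add: sum_distrib_left sum_distrib_right sum.distrib mult.assoc sum.swap[of _ T])
    (simp add: distrib_left sum.distrib sum_distrib_left)

lemma lin_cov_sum_left:
  "lin_cov (\<lambda>i. \<Sum>t\<in>T. w t * c t i) (\<lambda>S. \<Sum>t\<in>T. w t * d t S) c' d' = (\<Sum>t\<in>T. w t * lin_cov (c t) (d t) c' d')"
  unfolding lin_cov_def
  by (simp add: sum_distrib_left sum_distrib_right sum.distrib mult.assoc sum.swap[of _ T])
    (simp add: distrib_left sum.distrib sum_distrib_left)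

lemma lin_cov_combine_self:
  "lin_cov (\<lambda>i. a * c1 i + b * c2 i) (\<lambda>S. a * d1 S + b * d2 S) (\<lambda>i. a * c1 i + b * c2 i) (\<lambda>S. a * d1 S + b * d2 S)
     = a\<^sup>2 * lin_cov c1 d1 c1 d1 + 2 * a * b * lin_cov c1 d1 c2 d2 + b\<^sup>2 * lin_cov c2 d2 c2 d2"
  unfolding lin_cov_combine_left
  by (subst (1 2) lin_cov_sym, simp add: lin_cov_combine_left lin_cov_sym[of c2 d2 c1 d1])
    (simp add: power2_eq_square algebra_simps)

lemma indep_vars_X_N:
  assumes "\<And>k. k \<in> insert None (Some ` J) \<Longrightarrow> random_variable borel (Y k)"
    and "Y None \<in> borel_measurable (sigma (space M) (rv_sets M I X))"
    and "\<And>S. S \<in> J \<Longrightarrow> Y (Some S) \<in> borel_measurable (sigma (space M) (rv_sets M {S} N))"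
  shows "indep_vars (\<lambda>_. borel) Y (insert None (Some ` J))"
  unfolding indep_vars_def2
proof (intro conjI ballI assms(1) indep_sets_mono_sets[OF X_N_indep])
  fix k assume k: "k \<in> insert None (Some ` J)"
  show "{Y k -` B \<inter> space M |B. B \<in> sets borel}
      \<subseteq> sigma_sets (space M) (case k of None \<Rightarrow> rv_sets M I X | Some S \<Rightarrow> rv_sets M {S} N)"
  proof (cases k)
    case None
    then show ?thesis using vimage_sets_subset_sigma_rv_sets[OF assms(2)] by simp
  next
    case (Some S)
    then show ?thesis using k vimage_sets_subset_sigma_rv_sets[OF assms(3)] by auto
  qed
qed

lemma centered_normal_lin_comb: "centered_normal M (lin_comb c d) (lin_cov c d c d)"
proof -
  define Y where "Y k = (case k of None \<Rightarrow> (\<lambda>\<omega>. \<Sum>i\<in>I. c i * X i \<omega>) | Some S \<Rightarrow> (\<lambda>\<omega>. d S * N S \<omega>))" for k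
  define v where "v k = (case k of None \<Rightarrow> (\<Sum>i\<in>I. \<Sum>j\<in>I. c i * c j * C i j) | Some S \<Rightarrow> (d S)\<^sup>2)" for k
  have "centered_normal M (Y k) (v k)" if "k \<in> insert None (Some ` J)" for k
  proof (cases k)
    case None
    then show ?thesis
      using X_gaussian X_measurable C_psd[of c]
      by (auto simp: Y_def v_def centered_normal_def jointly_gaussian_def Let_def ac_simps)
  next
    case (Some S)
    then show ?thesis using that N_normal centered_normal_scale by (auto simp: Y_def v_def)
  qed
  moreover have "indep_vars (\<lambda>_. borel) Y (insert None (Some ` J))"
    using X_measurable N_normal[THEN distributed_measurable]
    by (intro indep_vars_X_N) (auto simp: Y_def split: option.split
        intro!: borel_measurable_sum borel_measurable_times measurable_sigma_rv_sets)
  ultimately have "centered_normal M (\<lambda>\<omega>. \<Sum>k\<in>insert None (Some ` J). Y k \<omega>) (\<Sum>k\<in>insert None (Some ` J). v k)"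
    using finite_J by (intro centered_normal_sum) auto
  then show ?thesis
    using finite_J by (simp add: sum.reindex Y_def v_def lin_comb_def[abs_def] lin_cov_def power2_eq_square)
qed

lemma lin_comb_cos_sin:
  "(\<integral>\<omega>. cos (lin_comb c d \<omega>) \<partial>M) = exp (- lin_cov c d c d / 2)"
  "(\<integral>\<omega>. sin (lin_comb c d \<omega>) \<partial>M) = 0"
  using centered_normal_cos_sin[OF centered_normal_lin_comb] by simp_all

lemma integrable_lin_comb_square: "integrable M (\<lambda>\<omega>. (lin_comb c d \<omega>)\<^sup>2)"
  using centered_normal_second_moment(1)[OF centered_normal_lin_comb] .

lemma integrable_lin_comb: "integrable M (lin_comb c d)"
  using square_integrable_imp_integrable[OF lin_comb_measurable integrable_lin_comb_square] .

lemma integral_lin_comb_mult: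
  "(\<integral>\<omega>. lin_comb c1 d1 \<omega> * lin_comb c2 d2 \<omega> \<partial>M) = lin_cov c1 d1 c2 d2"
proof -
  let ?P = "lin_comb (\<lambda>i. 1 * c1 i + 1 * c2 i) (\<lambda>S. 1 * d1 S + 1 * d2 S)"
  let ?D = "lin_comb (\<lambda>i. 1 * c1 i + (-1) * c2 i) (\<lambda>S. 1 * d1 S + (-1) * d2 S)"
  have "lin_comb c1 d1 \<omega> * lin_comb c2 d2 \<omega> = ((?P \<omega>)\<^sup>2 - (?D \<omega>)\<^sup>2) / 4" for \<omega>
    unfolding lin_comb_combine by (simp add: power2_eq_square algebra_simps)
  then have "(\<integral>\<omega>. lin_comb c1 d1 \<omega> * lin_comb c2 d2 \<omega> \<partial>M) = (\<integral>\<omega>. ((?P \<omega>)\<^sup>2 - (?D \<omega>)\<^sup>2) / 4 \<partial>M)"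
    by presburger
  also have "\<dots> = ((\<integral>\<omega>. (?P \<omega>)\<^sup>2 \<partial>M) - (\<integral>\<omega>. (?D \<omega>)\<^sup>2 \<partial>M)) / 4"
    by (subst integral_divide_zero, subst Bochner_Integration.integral_diff)
      (simp_all only: integrable_lin_comb_square)
  also have "\<dots> = lin_cov c1 d1 c2 d2"
    unfolding centered_normal_second_moment(2)[OF centered_normal_lin_comb] lin_cov_combine_self by simp
  finally show ?thesis .
qed

lemma integral_lin_comb_mult_cos_sin_eq_0:
  assumes orth: "lin_cov cW dW cR dR = 0"
  shows "(\<integral>\<omega>. lin_comb cR dR \<omega> * cos (lin_comb cW dW \<omega>) \<partial>M) = 0"
    and "(\<integral>\<omega>. lin_comb cR dR \<omega> * sin (lin_comb cW dW \<omega>) \<partial>M) = 0"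
proof -
  define R where "R = lin_comb cR dR"
  define W where "W = lin_comb cW dW"
  have shift: "W \<omega> + t * R \<omega> = lin_comb (\<lambda>i. 1 * cW i + t * cR i) (\<lambda>S. 1 * dW S + t * dR S) \<omega>" for t \<omega>
    unfolding lin_comb_combine R_def W_def by simp
  have var_shift: "lin_cov (\<lambda>i. 1 * cW i + t * cR i) (\<lambda>S. 1 * dW S + t * dR S)
      (\<lambda>i. 1 * cW i + t * cR i) (\<lambda>S. 1 * dW S + t * dR S)
      = lin_cov cW dW cW dW + t\<^sup>2 * lin_cov cR dR cR dR" for t
    unfolding lin_cov_combine_self orth by simp
  have R: "R \<in> borel_measurable M" "integrable M (\<lambda>\<omega>. (R \<omega>)\<^sup>2)"
    unfolding R_def using integrable_lin_comb_square by auto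
  have W: "W \<in> borel_measurable M" unfolding W_def by simp
  have cos_sin_W: "(\<integral>\<omega>. cos (W \<omega>) \<partial>M) = exp (- lin_cov cW dW cW dW / 2)" "(\<integral>\<omega>. sin (W \<omega>) \<partial>M) = 0"
    unfolding W_def lin_comb_cos_sin by simp_all
  have var_nonneg: "lin_cov c d c d \<ge> 0" for c d
    using centered_normal_lin_comb by (simp add: centered_normal_def)
  have "(\<integral>\<omega>. R \<omega> * - sin (W \<omega>) \<partial>M) = 0"
  proof (rule integral_mult_deriv_eq_0_if_flat[OF W R, where K = "lin_cov cR dR cR dR / 2"])
    fix t :: real assume "t > 0"
    have "\<bar>exp (- (a + b) / 2) - exp (- a / 2)\<bar> \<le> b / 2" if "a \<ge> 0" "b \<ge> 0" for a b :: real
    proof -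
      have "exp (- a / 2) - exp (- (a + b) / 2) = exp (- a / 2) * (1 - exp (- b / 2))"
        by (simp add: exp_add[symmetric] algebra_simps diff_divide_distrib)
      moreover have "exp (- a / 2) \<le> 1" "0 \<le> 1 - exp (- b / 2)" "1 - exp (- b / 2) \<le> b / 2"
        using that exp_ge_add_one_self[of "- b / 2"] by auto
      ultimately show ?thesis
        by (metis abs_minus_commute abs_of_nonneg exp_ge_zero mult_left_le_one_le mult_nonneg_nonneg order_trans)
    qed
    from this[of "lin_cov cW dW cW dW" "t\<^sup>2 * lin_cov cR dR cR dR"]
    show "\<bar>(\<integral>\<omega>. cos (W \<omega> + t * R \<omega>) \<partial>M) - (\<integral>\<omega>. cos (W \<omega>) \<partial>M)\<bar> \<le> t\<^sup>2 * (lin_cov cR dR cR dR / 2)"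
      using var_nonneg unfolding shift lin_comb_cos_sin var_shift cos_sin_W by simp
  qed (intro continuous_intros cos_sin_second_order_remainder | simp)+
  then show "(\<integral>\<omega>. lin_comb cR dR \<omega> * sin (lin_comb cW dW \<omega>) \<partial>M) = 0" by (simp add: R_def W_def)
  have "(\<integral>\<omega>. R \<omega> * cos (W \<omega>) \<partial>M) = 0"
    by (rule integral_mult_deriv_eq_0_if_flat[OF W R, where f = sin and K = 0])
      (intro continuous_intros cos_sin_second_order_remainder | simp add: shift lin_comb_cos_sin cos_sin_W)+
  then show "(\<integral>\<omega>. lin_comb cR dR \<omega> * cos (lin_comb cW dW \<omega>) \<partial>M) = 0" by (simp add: R_def W_def)
qed

end

context gaussian_linear_model
begin

text \<open>A Gaussian variable uncorrelated with finitely many others is orthogonal to every event they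
  generate, so adding it does not change the conditional expectation.\<close>

lemma real_cond_exp_add_uncorrelated:
  fixes T :: "'t set" and cW :: "'t \<Rightarrow> 'i \<Rightarrow> real" and dW :: "'t \<Rightarrow> 'j \<Rightarrow> real"
  defines "W \<equiv> \<lambda>t. lin_comb (cW t) (dW t)"
  defines "F \<equiv> sigma (space M) (rv_sets M T W)"
  assumes T: "finite T" and uncorrelated: "\<And>t. t \<in> T \<Longrightarrow> lin_cov (cW t) (dW t) cR dR = 0"
  shows "AE \<omega> in M. real_cond_exp M F (\<lambda>\<omega>. (\<Sum>t\<in>T. w t * W t \<omega>) + lin_comb cR dR \<omega>) \<omega>
           = (\<Sum>t\<in>T. w t * W t \<omega>)"
proof -
  have "rv_sets M T W \<subseteq> sets M" by (auto simp: rv_sets_def W_def)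
  then have "subalgebra M F" unfolding subalgebra_def F_def by (simp add: sets.sigma_sets_subset)
  then interpret sigma_finite_subalgebra M F
    by (intro finite_measure_subalgebra_is_sigma_finite)
      (simp add: finite_measure_subalgebra_def finite_measure_subalgebra_axioms_def finite_measure_axioms)
  have W_span: "(\<Sum>t\<in>T. s t * W t \<omega>) = lin_comb (\<lambda>i. \<Sum>t\<in>T. s t * cW t i) (\<lambda>S. \<Sum>t\<in>T. s t * dW t S) \<omega>"
    for s \<omega> by (simp add: W_def lin_comb_sum)
  have "lin_cov (\<lambda>i. \<Sum>t\<in>T. s t * cW t i) (\<lambda>S. \<Sum>t\<in>T. s t * dW t S) cR dR = 0" for s
    using uncorrelated by (simp add: lin_cov_sum_left)
  note orthogonal = integral_lin_comb_mult_cos_sin_eq_0[OF this]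
  have R_orthogonal: "(\<integral>\<omega>\<in>A. lin_comb cR dR \<omega> \<partial>M) = 0" if "A \<in> sets F" for A
    using that orthogonal unfolding F_def W_span[symmetric]
    by (intro set_integral_eq_0_sigma_rv_sets[OF T _ integrable_lin_comb]) (simp_all add: W_def)
  have Y_integrable: "integrable M (\<lambda>\<omega>. \<Sum>t\<in>T. w t * W t \<omega>)"
    unfolding W_span by (rule integrable_lin_comb)
  show ?thesis
  proof (rule real_cond_exp_charact)
    fix A assume A: "A \<in> sets F"
    then have "A \<in> sets M" using subalg by (auto simp: subalgebra_def)
    then show "(\<integral>\<omega>\<in>A. (\<Sum>t\<in>T. w t * W t \<omega>) + lin_comb cR dR \<omega> \<partial>M) = (\<integral>\<omega>\<in>A. (\<Sum>t\<in>T. w t * W t \<omega>) \<partial>M)"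
      using R_orthogonal[OF A] integrable_mult_indicator[OF _ Y_integrable]
        integrable_mult_indicator[OF _ integrable_lin_comb]
      by (subst set_integral_add(2)) (auto simp: set_integrable_def)
  next
    show "(\<lambda>\<omega>. \<Sum>t\<in>T. w t * W t \<omega>) \<in> borel_measurable F"
      unfolding F_def by (intro borel_measurable_sum borel_measurable_times borel_measurable_const
          measurable_sigma_rv_sets)
  qed (use Y_integrable integrable_lin_comb in auto)
qed

end

definition subsets_of_size :: "'a set \<Rightarrow> nat \<Rightarrow> 'a set set" where
  "subsets_of_size A k = {S. S \<subseteq> A \<and> card S = k}"

lemma finite_subsets_of_size: "finite A \<Longrightarrow> finite (subsets_of_size A k)"
  unfolding subsets_of_size_def by (rule finite_subset[of _ "Pow A"]) auto

lemma card_subsets_of_size: "finite A \<Longrightarrow> card (subsets_of_size A k) = card A choose k"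
  unfolding subsets_of_size_def by (rule n_subsets)

lemma card_subsets_of_size_superset:
  assumes A: "finite A" and B: "B \<subseteq> A"
  shows "real (card {S \<in> subsets_of_size A k. B \<subseteq> S}) = cbinom (int (card A - card B)) (int k - int (card B))"
proof (cases "card B \<le> k")
  case True
  have "{S \<in> subsets_of_size A k. B \<subseteq> S} = (\<lambda>S'. S' \<union> B) ` subsets_of_size (A - B) (k - card B)"
  proof (intro set_eqI iffI)
    fix S assume "S \<in> {S \<in> subsets_of_size A k. B \<subseteq> S}"
    then have S: "S \<subseteq> A" "card S = k" "B \<subseteq> S" by (auto simp: subsets_of_size_def)
    then have "S - B \<in> subsets_of_size (A - B) (k - card B)" "S = (S - B) \<union> B"
      using A B by (auto simp: subsets_of_size_def card_Diff_subset finite_subset)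
    then show "S \<in> (\<lambda>S'. S' \<union> B) ` subsets_of_size (A - B) (k - card B)" by blast
  next
    fix S assume "S \<in> (\<lambda>S'. S' \<union> B) ` subsets_of_size (A - B) (k - card B)"
    then obtain S' where "S' \<subseteq> A - B" "card S' = k - card B" "S = S' \<union> B"
      by (auto simp: subsets_of_size_def)
    moreover have "card (S' \<union> B) = card S' + card B"
      using calculation A B by (intro card_Un_disjoint) (auto intro: finite_subset)
    ultimately show "S \<in> {S \<in> subsets_of_size A k. B \<subseteq> S}"
      using B True by (auto simp: subsets_of_size_def)
  qed
  moreover have "inj_on (\<lambda>S'. S' \<union> B) (subsets_of_size (A - B) (k - card B))"
    by (rule inj_onI) (auto simp: subsets_of_size_def)
  moreover have "nat (int k - int (card B)) = k - card B" using True by simp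
  ultimately show ?thesis
    using A B True by (simp add: card_image card_subsets_of_size card_Diff_subset finite_subset cbinom_def)
next
  case False
  have "{S \<in> subsets_of_size A k. B \<subseteq> S} = {}"
    using False A card_mono[of _ B] by (auto simp: subsets_of_size_def intro: finite_subset)
  then show ?thesis using False by (simp only: card.empty) (simp add: cbinom_def)
qed

section \<open>The equicorrelated observation model\<close>

lemma equicorrelated_quadratic_form_nonneg:
  fixes c :: "'i \<Rightarrow> real"
  assumes "finite I" "\<rho> \<le> 1" "1 + (real (card I) - 1) * \<rho> \<ge> 0"
  shows "(\<Sum>i\<in>I. \<Sum>j\<in>I. c i * c j * (if i = j then 1 else \<rho>)) \<ge> 0"
proof -
  have "(\<Sum>i\<in>I. \<Sum>j\<in>I. c i * c j * (if i = j then 1 else \<rho>))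
      = (\<Sum>i\<in>I. \<Sum>j\<in>I. \<rho> * (c i * c j) + (if i = j then (1 - \<rho>) * (c i)\<^sup>2 else 0))"
    by (intro sum.cong) (auto simp: algebra_simps power2_eq_square)
  also have "\<dots> = \<rho> * (\<Sum>i\<in>I. c i)\<^sup>2 + (1 - \<rho>) * (\<Sum>i\<in>I. (c i)\<^sup>2)"
  proof -
    have "\<rho> * (\<Sum>i\<in>I. c i)\<^sup>2 = \<rho> * (\<Sum>i\<in>I. \<Sum>j\<in>I. c i * c j)"
      by (simp only: power2_eq_square sum_product)
    then show ?thesis using assms(1) by (simp add: sum.distrib sum_distrib_left)
  qed
  also have "\<dots> \<ge> 0"
  proof (cases "\<rho> \<ge> 0")
    case True
    then show ?thesis using assms by (intro add_nonneg_nonneg mult_nonneg_nonneg sum_nonneg) auto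
  next
    case False
    have "\<rho> * (\<Sum>i\<in>I. c i)\<^sup>2 \<ge> \<rho> * (real (card I) * (\<Sum>i\<in>I. (c i)\<^sup>2))"
      using False sum_squared_le_sum_of_squares[of c I] by (intro mult_left_mono_neg) (auto simp: ac_simps)
    moreover have "(1 + (real (card I) - 1) * \<rho>) * (\<Sum>i\<in>I. (c i)\<^sup>2) \<ge> 0"
      using assms by (intro mult_nonneg_nonneg sum_nonneg) auto
    ultimately show ?thesis by (simp add: algebra_simps)
  qed
  finally show ?thesis .
qed

text \<open>The common denominator factors into the denominators of \<open>\<alpha>\<close> and \<open>\<beta>\<close>, and parametrising
  \<open>a\<close>, \<open>b\<close>, \<open>c\<close> by \<open>t = a / (l - 1)\<close> turns the remaining identities into polynomial ones.\<close>

lemma equicorrelated_error_closed_form: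
  fixes a b c N \<rho> \<gamma> l m :: real
  assumes bc: "b + c = a" and bl: "(l - 1) * b = (m - 1) * a" and la: "l * a = m * N"
    and l2: "l \<ge> 2" and m1: "m \<ge> 1" and rl: "1 + (l - 1) * \<rho> > 0" and r1: "\<rho> < 1" and g: "\<gamma> > 0"
    and a0: "a > 0" and c0: "c \<ge> 0"
  defines "\<alpha> \<equiv> (1 - \<rho>) / ((1 - \<rho>) * c + \<gamma>)"
  defines "\<beta> \<equiv> (m * \<rho> - \<alpha> * ((1 - \<rho>) * m * b + m\<^sup>2 * \<rho> * a)) / ((1 - \<rho>) * m * a + m\<^sup>2 * \<rho> * N + \<gamma>)"
  defines "\<eta>1 \<equiv> a * c * m * (1 - \<rho>) * (1 + (l - 1) * \<rho>)"
    and "\<eta>2 \<equiv> a * (1 + (m - 1) * \<rho>) + c * m * (1 + (l - 2) * \<rho>) + b * ((l - 1) * m * \<rho> + (m - 1) * (1 - \<rho>))"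
    and "\<eta>3 \<equiv> a * (1 + (m - 1) * \<rho>) + c * (l - 1) * m * \<rho>\<^sup>2 + b * (l - 1) * \<rho> * (1 + (m - 1) * \<rho>)"
    and "\<eta>4 \<equiv> a * \<rho> * (1 + (m - 1) * \<rho>) + c * m * \<rho> * (1 + (l - 2) * \<rho>)
                + b * (1 + (l - 2) * \<rho>) * (1 + (m - 1) * \<rho>)"
  shows "1 - \<alpha> * (1 - \<rho>) * a - \<alpha> * m * \<rho> * a - \<beta> * (1 - \<rho>) * a - \<beta> * m * \<rho> * N
           = 1 - (\<eta>3 * \<gamma> + \<eta>1) / (\<gamma>\<^sup>2 + \<eta>2 * \<gamma> + \<eta>1)"
    and "\<rho> - \<alpha> * (1 - \<rho>) * b - \<alpha> * m * \<rho> * a - \<beta> * (1 - \<rho>) * a - \<beta> * m * \<rho> * N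
           = \<rho> - (\<eta>4 * \<gamma> + \<eta>1 * \<rho>) / (\<gamma>\<^sup>2 + \<eta>2 * \<gamma> + \<eta>1)"
proof -
  have l1: "l - 1 > 0" using l2 by simp
  have m0: "m > 0" using m1 by simp
  define t where "t = a / (l - 1)"
  have A: "a = (l - 1) * t" using l1 by (simp add: t_def)
  have B: "b = (m - 1) * t" using bl l1 by (simp add: t_def field_simps)
  have C: "c = (l - m) * t" using bc A B by (simp add: algebra_simps)
  have mN: "m * N = l * (l - 1) * t" using la A by simp
  define P1 where "P1 = (1 - \<rho>) * c + \<gamma>"
  define P2 where "P2 = m * a * (1 + (l - 1) * \<rho>) + \<gamma>"
  define K where "K = (1 - \<rho>) * m * b + m\<^sup>2 * \<rho> * a"
  define T where "T = (1 - \<rho>) * a + \<rho> * (m * N)"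
  have d1: "P1 > 0" using r1 c0 g unfolding P1_def by (simp add: add_nonneg_pos)
  have e2: "(1 - \<rho>) * m * a + m\<^sup>2 * \<rho> * N = m * a * (1 + (l - 1) * \<rho>)"
    using la by (simp add: field_simps power2_eq_square)
  have d2: "P2 > 0" unfolding P2_def using m0 a0 rl g by (simp add: add_pos_pos)
  have al: "\<alpha> = (1 - \<rho>) / P1" unfolding \<alpha>_def P1_def ..
  have be: "\<beta> = (m * \<rho> - \<alpha> * K) / P2" unfolding \<beta>_def K_def P2_def e2 ..
  have DD: "\<gamma>\<^sup>2 + \<eta>2 * \<gamma> + \<eta>1 = P1 * P2"
    unfolding \<eta>1_def \<eta>2_def P1_def P2_def A B C using l1 m0 by (simp add: field_simps power2_eq_square)
  have L1: "\<alpha> * (1 - \<rho>) * a + \<alpha> * m * \<rho> * a + \<beta> * (1 - \<rho>) * a + \<beta> * m * \<rho> * N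
      = ((1 - \<rho>) * a * (1 - \<rho> + m * \<rho>) * P2 + (m * \<rho> * P1 - (1 - \<rho>) * K) * T) / (P1 * P2)"
    unfolding al be T_def using d1 d2 by (simp add: field_simps)
  have L2: "\<alpha> * (1 - \<rho>) * b + \<alpha> * m * \<rho> * a + \<beta> * (1 - \<rho>) * a + \<beta> * m * \<rho> * N
      = ((1 - \<rho>) * ((1 - \<rho>) * b + m * \<rho> * a) * P2 + (m * \<rho> * P1 - (1 - \<rho>) * K) * T) / (P1 * P2)"
    unfolding al be T_def using d1 d2 by (simp add: field_simps)
  have N1: "(1 - \<rho>) * a * (1 - \<rho> + m * \<rho>) * P2 + (m * \<rho> * P1 - (1 - \<rho>) * K) * T = \<eta>3 * \<gamma> + \<eta>1"
    unfolding T_def mN unfolding \<eta>1_def \<eta>3_def P1_def P2_def K_def A B C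
    by (simp add: algebra_simps power2_eq_square)
  have N2: "(1 - \<rho>) * ((1 - \<rho>) * b + m * \<rho> * a) * P2 + (m * \<rho> * P1 - (1 - \<rho>) * K) * T = \<eta>4 * \<gamma> + \<eta>1 * \<rho>"
    unfolding T_def mN unfolding \<eta>1_def \<eta>4_def P1_def P2_def K_def A B C
    by (simp add: algebra_simps power2_eq_square)
  show "1 - \<alpha> * (1 - \<rho>) * a - \<alpha> * m * \<rho> * a - \<beta> * (1 - \<rho>) * a - \<beta> * m * \<rho> * N
           = 1 - (\<eta>3 * \<gamma> + \<eta>1) / (\<gamma>\<^sup>2 + \<eta>2 * \<gamma> + \<eta>1)"
    using L1 N1 DD by (simp add: algebra_simps)
  show "\<rho> - \<alpha> * (1 - \<rho>) * b - \<alpha> * m * \<rho> * a - \<beta> * (1 - \<rho>) * a - \<beta> * m * \<rho> * N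
           = \<rho> - (\<eta>4 * \<gamma> + \<eta>1 * \<rho>) / (\<gamma>\<^sup>2 + \<eta>2 * \<gamma> + \<eta>1)"
    using L2 N2 DD by (simp add: algebra_simps)
qed

locale equicorrelated_observations = prob_space +
  fixes I :: "'i set" and l m :: nat and \<rho> \<gamma> :: real
    and X :: "'i \<Rightarrow> 'a \<Rightarrow> real" and N :: "'i set \<Rightarrow> 'a \<Rightarrow> real"
  assumes finite_I: "finite I" and card_I: "card I = l" and l: "l \<ge> 2"
    and \<rho>_lower: "-1 / (real l - 1) < \<rho>" and \<rho>_upper: "\<rho> < 1"
    and m: "1 \<le> m" "m \<le> l" and \<gamma>: "\<gamma> > 0"
    and X_gaussian: "jointly_gaussian M I X (\<lambda>_. 0) (\<lambda>i j. if i = j then 1 else \<rho>)"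
    and N_normal: "\<forall>S\<in>subsets_of_size I m. distributed M lborel (N S) (normal_density 0 1)"
    and X_N_indep: "indep_sets
           (\<lambda>k. sigma_sets (space M)
                  (case k of None \<Rightarrow> rv_sets M I X | Some S \<Rightarrow> rv_sets M {S} N))
           (insert None (Some ` subsets_of_size I m))"
begin

lemma \<rho>_bound: "1 + (real l - 1) * \<rho> > 0"
  using l \<rho>_lower by (simp add: field_simps)

end

sublocale equicorrelated_observations \<subseteq>
  gaussian_linear_model M I X "\<lambda>i j. if i = j then 1 else \<rho>" "subsets_of_size I m" N
  using finite_subsets_of_size[OF finite_I] X_gaussian N_normal X_N_indep \<rho>_upper \<rho>_bound
  by unfold_locales (auto intro!: equicorrelated_quadratic_form_nonneg finite_I simp: card_I)

context equicorrelated_observations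
begin

abbreviation obs_sets :: "'i set set" where
  "obs_sets \<equiv> subsets_of_size I m"

definition obs_noise :: "'i set \<Rightarrow> 'i set \<Rightarrow> real" where
  "obs_noise T S = (if S = T then sqrt \<gamma> else 0)"

lemma obs_sets_subset: "T \<in> obs_sets \<Longrightarrow> T \<subseteq> I"
  and obs_sets_card: "T \<in> obs_sets \<Longrightarrow> card T = m"
  and obs_sets_finite: "T \<in> obs_sets \<Longrightarrow> finite T"
  using finite_I by (auto simp: subsets_of_size_def intro: finite_subset)

lemma lin_comb_point: "i \<in> I \<Longrightarrow> lin_comb (indicator {i}) (\<lambda>_. 0) \<omega> = X i \<omega>"
  using finite_I unfolding lin_comb_def
  by (simp add: indicator_def of_bool_def if_distrib[of "\<lambda>x. x * _"] cong: if_cong)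

lemma lin_comb_obs:
  "T \<in> obs_sets \<Longrightarrow> lin_comb (indicator T) (obs_noise T) \<omega> = (\<Sum>k\<in>T. X k \<omega>) + sqrt \<gamma> * N T \<omega>"
  using obs_sets_subset[of T] finite_subsets_of_size[OF finite_I] finite_I unfolding lin_comb_def
  by (simp add: obs_noise_def indicator_def Int_absorb1 if_distrib[of "\<lambda>x. x * _"] cong: if_cong)

lemma lin_cov_indicator:
  assumes A: "A \<subseteq> I" and B: "B \<subseteq> I"
  shows "lin_cov (indicator A) d (indicator B) d'
    = (1 - \<rho>) * real (card (A \<inter> B)) + \<rho> * real (card A) * real (card B) + (\<Sum>S\<in>obs_sets. d S * d' S)"
proof -
  have finite: "finite A" "finite B" using A B finite_subset finite_I by auto
  have row: "(\<Sum>j\<in>B. if i = j then 1 else \<rho>) = \<rho> * real (card B) + (1 - \<rho>) * indicator B i" for i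
  proof -
    have "(\<Sum>j\<in>B. if i = j then 1 else \<rho>) = (\<Sum>j\<in>B. \<rho> + (if i = j then 1 - \<rho> else 0))"
      by (intro sum.cong) auto
    then show ?thesis using finite by (simp add: sum.distrib indicator_def)
  qed
  have restrict: "(\<Sum>x\<in>I. indicator E x * f x) = (\<Sum>x\<in>E. f x)" if "E \<subseteq> I" for E and f :: "'i \<Rightarrow> real"
    using that finite_I by (intro sum.mono_neutral_cong_right) (auto simp: indicator_def)
  have "(\<Sum>i\<in>I. \<Sum>j\<in>I. indicator A i * indicator B j * (if i = j then 1 else \<rho>))
      = (\<Sum>i\<in>I. indicator A i * (\<Sum>j\<in>I. indicator B j * (if i = j then 1 else \<rho>)))"
    by (simp only: mult.assoc sum_distrib_left)
  also have "\<dots> = (\<Sum>i\<in>A. \<Sum>j\<in>B. if i = j then 1 else \<rho>)"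
    by (simp only: restrict[OF A] restrict[OF B])
  also have "\<dots> = (1 - \<rho>) * real (card (A \<inter> B)) + \<rho> * real (card A) * real (card B)"
  proof -
    have "(\<Sum>i\<in>A. indicator B i) = real (card (A \<inter> B))" using finite by (simp add: indicator_def)
    then show ?thesis by (simp add: row sum.distrib flip: sum_distrib_left)
  qed
  finally show ?thesis unfolding lin_cov_def by simp
qed

text \<open>Numbers of \<open>m\<close>-subsets of \<open>I\<close> containing a given point, a given pair of distinct points,
  a given point but not another given point, and all \<open>m\<close>-subsets.\<close>

definition n_pt :: real where "n_pt = cbinom (int l - 1) (int m - 1)"
definition n_pair :: real where "n_pair = cbinom (int l - 2) (int m - 2)"
definition n_sep :: real where "n_sep = cbinom (int l - 2) (int m - 1)"
definition n_all :: real where "n_all = real (l choose m)"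

lemma n_pt_nat: "n_pt = real ((l - 1) choose (m - 1))"
  and n_sep_nat: "n_sep = real ((l - 2) choose (m - 1))"
  and n_pair_nat: "n_pair = (if m \<ge> 2 then real ((l - 2) choose (m - 2)) else 0)"
  using l m by (auto simp: n_pt_def n_sep_def n_pair_def cbinom_def nat_diff_distrib)

lemma n_pt_split: "n_pt = n_pair + n_sep"
proof (cases "m \<ge> 2")
  case True
  have "Suc (l - 2) choose Suc (m - 2) = ((l - 2) choose (m - 2)) + ((l - 2) choose Suc (m - 2))"
    by (rule binomial_Suc_Suc)
  moreover have "Suc (l - 2) = l - 1" "Suc (m - 2) = m - 1" using l True by auto
  ultimately show ?thesis using True by (simp add: n_pt_nat n_pair_nat n_sep_nat)
next
  case False
  then have "m = 1" using m by simp
  then show ?thesis unfolding n_pt_nat n_pair_nat n_sep_nat by simp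
qed

lemma n_all_eq: "real l * n_pt = real m * n_all"
proof -
  have "Suc (l - 1) * ((l - 1) choose (m - 1)) = (Suc (l - 1) choose Suc (m - 1)) * Suc (m - 1)"
    by (rule Suc_times_binomial_eq)
  then have "l * ((l - 1) choose (m - 1)) = (l choose m) * m" using l m by simp
  then show ?thesis unfolding n_pt_nat n_all_def by (metis of_nat_mult mult.commute)
qed

lemma n_pair_eq: "(real l - 1) * n_pair = (real m - 1) * n_pt"
proof (cases "m \<ge> 2")
  case True
  have "Suc (l - 2) * ((l - 2) choose (m - 2)) = (Suc (l - 2) choose Suc (m - 2)) * Suc (m - 2)"
    by (rule Suc_times_binomial_eq)
  moreover have "Suc (l - 2) = l - 1" "Suc (m - 2) = m - 1" using l True by auto
  ultimately have "(l - 1) * ((l - 2) choose (m - 2)) = ((l - 1) choose (m - 1)) * (m - 1)" by simp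
  then have "real ((l - 1) * ((l - 2) choose (m - 2))) = real (((l - 1) choose (m - 1)) * (m - 1))" by simp
  then show ?thesis using True l by (simp add: n_pt_nat n_pair_nat of_nat_diff ac_simps)
next
  case False
  then show ?thesis using m by (simp add: n_pair_nat)
qed

lemma n_pt_pos: "n_pt > 0" and n_sep_nonneg: "n_sep \<ge> 0"
  using m by (simp_all add: n_pt_nat n_sep_nat)

lemma card_obs_sets: "real (card obs_sets) = n_all"
  by (simp add: card_subsets_of_size finite_I card_I n_all_def)

lemma card_obs_sets_superset:
  "B \<subseteq> I \<Longrightarrow> real (card {S \<in> obs_sets. B \<subseteq> S}) = cbinom (int (l - card B)) (int m - int (card B))"
  using card_subsets_of_size_superset[OF finite_I, of B m] by (simp add: card_I)

lemma sum_indicator_point: "i \<in> I \<Longrightarrow> (\<Sum>S\<in>obs_sets. indicator S i) = n_pt"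
  using card_obs_sets_superset[of "{i}"] finite_subsets_of_size[OF finite_I] l
  by (simp add: indicator_def n_pt_def Int_def of_nat_diff)

lemma sum_indicator_pair:
  assumes "i \<in> I" "j \<in> I"
  shows "(\<Sum>S\<in>obs_sets. indicator S i * indicator S j) = (if i = j then n_pt else n_pair)"
proof (cases "i = j")
  case True
  have square: "indicator S i * indicator S i = (indicator S i :: real)" for S
    by (simp add: indicator_def)
  show ?thesis using sum_indicator_point[OF assms(1)] unfolding True[symmetric] square by simp
next
  case False
  then show ?thesis
    using card_obs_sets_superset[of "{i, j}"] finite_subsets_of_size[OF finite_I] l assms
    by (simp add: indicator_def n_pair_def Int_def of_nat_diff flip: of_bool_conj)
qed

lemma sum_card_Int:
  assumes "T \<in> obs_sets"
  shows "(\<Sum>S\<in>obs_sets. real (card (S \<inter> T))) = real m * n_pt"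
proof -
  have "(\<Sum>S\<in>obs_sets. real (card (S \<inter> T))) = (\<Sum>S\<in>obs_sets. \<Sum>k\<in>T. indicator S k)"
    using obs_sets_finite[OF assms] by (intro sum.cong) (simp_all add: indicator_def Int_def conj_commute)
  also have "\<dots> = (\<Sum>k\<in>T. n_pt)"
    using obs_sets_subset[OF assms] by (subst sum.swap) (intro sum.cong, auto simp: sum_indicator_point)
  finally show ?thesis using obs_sets_card[OF assms] by simp
qed

lemma sum_indicator_card_Int:
  assumes "i \<in> I" "T \<in> obs_sets"
  shows "(\<Sum>S\<in>obs_sets. indicator S i * real (card (S \<inter> T))) = real m * n_pair + indicator T i * (n_pt - n_pair)"
proof -
  have "(\<Sum>S\<in>obs_sets. indicator S i * real (card (S \<inter> T))) = (\<Sum>S\<in>obs_sets. \<Sum>k\<in>T. indicator S i * indicator S k)"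
    using obs_sets_finite[OF assms(2)]
    by (intro sum.cong) (simp_all add: indicator_def Int_def conj_commute flip: sum_distrib_left)
  also have "\<dots> = (\<Sum>k\<in>T. n_pair + (if k = i then n_pt - n_pair else 0))"
    using obs_sets_subset[OF assms(2)] assms(1)
    by (subst sum.swap) (intro sum.cong, auto simp: sum_indicator_pair)
  finally show ?thesis
    using obs_sets_finite[OF assms(2)] obs_sets_card[OF assms(2)] by (simp add: sum.distrib indicator_def)
qed

text \<open>The estimator of \<open>X i\<close> is \<open>\<Sum>S. (\<alpha> [i \<in> S] + \<beta>) U S\<close>.  By symmetry its residual is
  uncorrelated with every observation \<open>U T\<close> as soon as two linear equations hold, one for \<open>i \<in> T\<close>
  and one for \<open>i \<notin> T\<close>; \<open>\<alpha>\<close> and \<open>\<beta>\<close> are their solution.\<close>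

definition \<alpha> :: real where "\<alpha> = (1 - \<rho>) / ((1 - \<rho>) * n_sep + \<gamma>)"

definition \<beta> :: real where
  "\<beta> = (real m * \<rho> - \<alpha> * ((1 - \<rho>) * real m * n_pair + (real m)\<^sup>2 * \<rho> * n_pt))
        / ((1 - \<rho>) * real m * n_pt + (real m)\<^sup>2 * \<rho> * n_all + \<gamma>)"

definition weight :: "'i \<Rightarrow> 'i set \<Rightarrow> real" where
  "weight i S = \<alpha> * indicator S i + \<beta>"

definition resid_coeff :: "'i \<Rightarrow> 'i \<Rightarrow> real" where
  "resid_coeff i k = indicator {i} k - (\<Sum>S\<in>obs_sets. weight i S * indicator S k)"

definition resid_noise :: "'i \<Rightarrow> 'i set \<Rightarrow> real" where
  "resid_noise i S' = - (\<Sum>S\<in>obs_sets. weight i S * obs_noise S S')"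

lemma \<alpha>_equation: "\<alpha> * ((1 - \<rho>) * n_sep + \<gamma>) = 1 - \<rho>"
proof -
  have "(1 - \<rho>) * n_sep + \<gamma> > 0" using \<rho>_upper n_sep_nonneg \<gamma> by (simp add: add_nonneg_pos)
  then show ?thesis by (simp add: \<alpha>_def)
qed

lemma \<beta>_equation:
  "\<alpha> * ((1 - \<rho>) * real m * n_pair + (real m)\<^sup>2 * \<rho> * n_pt)
     + \<beta> * ((1 - \<rho>) * real m * n_pt + (real m)\<^sup>2 * \<rho> * n_all + \<gamma>) = real m * \<rho>"
proof -
  have "(1 - \<rho>) * real m * n_pt + (real m)\<^sup>2 * \<rho> * n_all = real m * n_pt * (1 + (real l - 1) * \<rho>)"
    using n_all_eq by (simp add: power2_eq_square algebra_simps)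
  then have "(1 - \<rho>) * real m * n_pt + (real m)\<^sup>2 * \<rho> * n_all + \<gamma> > 0"
    using m n_pt_pos \<rho>_bound \<gamma> by (simp add: add_pos_pos)
  then show ?thesis by (simp add: \<beta>_def)
qed

lemma lin_cov_point_point:
  "i \<in> I \<Longrightarrow> j \<in> I \<Longrightarrow> lin_cov (indicator {i}) (\<lambda>_. 0) (indicator {j}) (\<lambda>_. 0) = (if i = j then 1 else \<rho>)"
  by (simp add: lin_cov_indicator)

lemma lin_cov_obs_point:
  "T \<in> obs_sets \<Longrightarrow> j \<in> I \<Longrightarrow>
    lin_cov (indicator T) (obs_noise T) (indicator {j}) (\<lambda>_. 0) = real m * \<rho> + (1 - \<rho>) * indicator T j"
  by (simp add: lin_cov_indicator obs_sets_subset obs_sets_card indicator_def)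

lemma lin_cov_obs_obs:
  assumes "S \<in> obs_sets" "T \<in> obs_sets"
  shows "lin_cov (indicator S) (obs_noise S) (indicator T) (obs_noise T)
    = (1 - \<rho>) * real (card (S \<inter> T)) + (real m)\<^sup>2 * \<rho> + (if S = T then \<gamma> else 0)"
  using assms finite_subsets_of_size[OF finite_I] \<gamma>
  by (simp add: lin_cov_indicator obs_sets_subset obs_sets_card obs_noise_def power2_eq_square
      if_distrib[of "\<lambda>x. x * _"] cong: if_cong)

lemma resid_as_combination:
  "resid_coeff i = (\<lambda>k. 1 * indicator {i} k + (-1) * (\<Sum>S\<in>obs_sets. weight i S * indicator S k))"
  "resid_noise i = (\<lambda>S'. 1 * 0 + (-1) * (\<Sum>S\<in>obs_sets. weight i S * obs_noise S S'))"
  by (simp_all add: fun_eq_iff resid_coeff_def resid_noise_def)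

lemma lin_cov_resid_left:
  "lin_cov (resid_coeff i) (resid_noise i) c' d'
    = lin_cov (indicator {i}) (\<lambda>_. 0) c' d'
      - (\<Sum>S\<in>obs_sets. weight i S * lin_cov (indicator S) (obs_noise S) c' d')"
  unfolding resid_as_combination lin_cov_combine_left lin_cov_sum_left by simp

lemma X_decomposition:
  assumes "i \<in> I"
  shows "X i \<omega> = (\<Sum>S\<in>obs_sets. weight i S * lin_comb (indicator S) (obs_noise S) \<omega>)
                    + lin_comb (resid_coeff i) (resid_noise i) \<omega>"
  unfolding resid_as_combination lin_comb_combine lin_comb_sum using lin_comb_point[OF assms] by simp

lemma sum_obs_sets_const: "(\<Sum>S\<in>obs_sets. c) = c * n_all"
  using card_obs_sets by simp

lemma resid_uncorrelated:
  assumes i: "i \<in> I" and T: "T \<in> obs_sets"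
  shows "lin_cov (indicator T) (obs_noise T) (resid_coeff i) (resid_noise i) = 0"
proof -
  have delta: "(\<Sum>S\<in>obs_sets. if S = T then c else 0) = c" for c
    using T finite_subsets_of_size[OF finite_I] by simp
  have "(\<Sum>S\<in>obs_sets. weight i S * lin_cov (indicator S) (obs_noise S) (indicator T) (obs_noise T))
      = (\<Sum>S\<in>obs_sets. \<alpha> * (1 - \<rho>) * (indicator S i * real (card (S \<inter> T)))
          + \<alpha> * ((real m)\<^sup>2 * \<rho>) * indicator S i + \<alpha> * (if S = T then indicator T i * \<gamma> else 0)
          + \<beta> * (1 - \<rho>) * real (card (S \<inter> T)) + \<beta> * ((real m)\<^sup>2 * \<rho>) + \<beta> * (if S = T then \<gamma> else 0))"
    using T by (intro sum.cong) (auto simp: lin_cov_obs_obs weight_def algebra_simps)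
  also have "\<dots> = \<alpha> * (1 - \<rho>) * (\<Sum>S\<in>obs_sets. indicator S i * real (card (S \<inter> T)))
      + \<alpha> * ((real m)\<^sup>2 * \<rho>) * (\<Sum>S\<in>obs_sets. indicator S i)
      + \<alpha> * (\<Sum>S\<in>obs_sets. if S = T then indicator T i * \<gamma> else 0)
      + \<beta> * (1 - \<rho>) * (\<Sum>S\<in>obs_sets. real (card (S \<inter> T)))
      + (\<Sum>S\<in>obs_sets. \<beta> * ((real m)\<^sup>2 * \<rho>)) + \<beta> * (\<Sum>S\<in>obs_sets. if S = T then \<gamma> else 0)"
    by (simp only: sum.distrib sum_distrib_left)
  also have "\<dots> = \<alpha> * (1 - \<rho>) * (real m * n_pair + indicator T i * (n_pt - n_pair))
      + \<alpha> * ((real m)\<^sup>2 * \<rho>) * n_pt + \<alpha> * (indicator T i * \<gamma>)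
      + \<beta> * (1 - \<rho>) * (real m * n_pt) + \<beta> * ((real m)\<^sup>2 * \<rho>) * n_all + \<beta> * \<gamma>"
    unfolding sum_indicator_card_Int[OF i T] sum_indicator_point[OF i] sum_card_Int[OF T]
      sum_obs_sets_const delta ..
  finally have sum: "(\<Sum>S\<in>obs_sets. weight i S * lin_cov (indicator S) (obs_noise S) (indicator T) (obs_noise T))
      = \<dots>" .
  have point: "lin_cov (indicator {i}) (\<lambda>_. 0) (indicator T) (obs_noise T) = real m * \<rho> + (1 - \<rho>) * indicator T i"
    using lin_cov_obs_point[OF T i] lin_cov_sym by metis
  have "lin_cov (indicator T) (obs_noise T) (resid_coeff i) (resid_noise i)
      = lin_cov (resid_coeff i) (resid_noise i) (indicator T) (obs_noise T)"
    by (rule lin_cov_sym)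
  also have "\<dots> = real m * \<rho> + (1 - \<rho>) * indicator T i
      - (\<alpha> * (1 - \<rho>) * (real m * n_pair + indicator T i * (n_pt - n_pair))
      + \<alpha> * ((real m)\<^sup>2 * \<rho>) * n_pt + \<alpha> * (indicator T i * \<gamma>)
      + \<beta> * (1 - \<rho>) * (real m * n_pt) + \<beta> * ((real m)\<^sup>2 * \<rho>) * n_all + \<beta> * \<gamma>)"
    by (simp only: lin_cov_resid_left sum point)
  also have "\<dots> = 0"
    using \<alpha>_equation \<beta>_equation n_pt_split
    by (cases "i \<in> T") (simp_all add: algebra_simps power2_eq_square)
  finally show ?thesis .
qed

lemma resid_covariance:
  assumes i: "i \<in> I" and j: "j \<in> I"
  shows "lin_cov (resid_coeff i) (resid_noise i) (resid_coeff j) (resid_noise j)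
    = (if i = j then 1 else \<rho>) - \<alpha> * (1 - \<rho>) * (if i = j then n_pt else n_pair) - \<alpha> * real m * \<rho> * n_pt
      - \<beta> * (1 - \<rho>) * n_pt - \<beta> * real m * \<rho> * n_all"
proof -
  have "lin_cov (resid_coeff i) (resid_noise i) (resid_coeff j) (resid_noise j)
      = lin_cov (indicator {j}) (\<lambda>_. 0) (resid_coeff i) (resid_noise i)"
    using resid_uncorrelated[OF i] by (subst lin_cov_sym) (simp add: lin_cov_resid_left)
  also have "\<dots> = (if i = j then 1 else \<rho>)
      - (\<Sum>S\<in>obs_sets. (\<alpha> * indicator S i + \<beta>) * (real m * \<rho> + (1 - \<rho>) * indicator S j))"
    using i j by (subst lin_cov_sym)
      (simp add: lin_cov_resid_left lin_cov_point_point lin_cov_obs_point weight_def)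
  also have "(\<Sum>S\<in>obs_sets. (\<alpha> * indicator S i + \<beta>) * (real m * \<rho> + (1 - \<rho>) * indicator S j))
      = (\<Sum>S\<in>obs_sets. \<alpha> * (1 - \<rho>) * (indicator S i * indicator S j) + \<alpha> * real m * \<rho> * indicator S i
          + \<beta> * (1 - \<rho>) * indicator S j + \<beta> * real m * \<rho>)"
    by (intro sum.cong) (simp_all add: algebra_simps)
  also have "\<dots> = \<alpha> * (1 - \<rho>) * (\<Sum>S\<in>obs_sets. indicator S i * indicator S j)
        + \<alpha> * real m * \<rho> * (\<Sum>S\<in>obs_sets. indicator S i)
        + \<beta> * (1 - \<rho>) * (\<Sum>S\<in>obs_sets. indicator S j) + (\<Sum>S\<in>obs_sets. \<beta> * real m * \<rho>)"
    by (simp only: sum.distrib sum_distrib_left)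
  also have "\<dots> = \<alpha> * (1 - \<rho>) * (if i = j then n_pt else n_pair) + \<alpha> * real m * \<rho> * n_pt
        + \<beta> * (1 - \<rho>) * n_pt + \<beta> * real m * \<rho> * n_all"
    unfolding sum_indicator_pair[OF i j] sum_indicator_point[OF i] sum_indicator_point[OF j] sum_obs_sets_const ..
  finally show ?thesis by simp
qed

lemma integral_error_mult:
  assumes i: "i \<in> I" and j: "j \<in> I"
  defines "F \<equiv> sigma (space M) (rv_sets M obs_sets (\<lambda>S \<omega>. (\<Sum>k\<in>S. X k \<omega>) + sqrt \<gamma> * N S \<omega>))"
  shows "(\<integral>\<omega>. (X i \<omega> - real_cond_exp M F (X i) \<omega>) * (X j \<omega> - real_cond_exp M F (X j) \<omega>) \<partial>M)
           = lin_cov (resid_coeff i) (resid_noise i) (resid_coeff j) (resid_noise j)"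
proof -
  have F: "F = sigma (space M) (rv_sets M obs_sets (\<lambda>T. lin_comb (indicator T) (obs_noise T)))"
    unfolding F_def by (intro arg_cong[where f = "sigma _"] rv_sets_cong) (simp add: fun_eq_iff lin_comb_obs)
  have error: "AE \<omega> in M. X k \<omega> - real_cond_exp M F (X k) \<omega> = lin_comb (resid_coeff k) (resid_noise k) \<omega>"
    if k: "k \<in> I" for k
  proof -
    have "X k = (\<lambda>\<omega>. (\<Sum>S\<in>obs_sets. weight k S * lin_comb (indicator S) (obs_noise S) \<omega>)
                      + lin_comb (resid_coeff k) (resid_noise k) \<omega>)"
      using X_decomposition[OF k] by (simp add: fun_eq_iff)
    moreover have "AE \<omega> in M. real_cond_exp M F
        (\<lambda>\<omega>. (\<Sum>S\<in>obs_sets. weight k S * lin_comb (indicator S) (obs_noise S) \<omega>)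
              + lin_comb (resid_coeff k) (resid_noise k) \<omega>) \<omega>
        = (\<Sum>S\<in>obs_sets. weight k S * lin_comb (indicator S) (obs_noise S) \<omega>)"
      unfolding F using resid_uncorrelated[OF k] finite_subsets_of_size[OF finite_I]
      by (intro real_cond_exp_add_uncorrelated)
    ultimately show ?thesis using X_decomposition[OF k] by (auto elim: AE_mp)
  qed
  have "(\<integral>\<omega>. (X i \<omega> - real_cond_exp M F (X i) \<omega>) * (X j \<omega> - real_cond_exp M F (X j) \<omega>) \<partial>M)
      = (\<integral>\<omega>. lin_comb (resid_coeff i) (resid_noise i) \<omega> * lin_comb (resid_coeff j) (resid_noise j) \<omega> \<partial>M)"
    using error[OF i] error[OF j] X_measurable[OF i] X_measurable[OF j]
    by (intro integral_cong_AE) (auto elim: AE_mp)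
  then show ?thesis by (simp add: integral_lin_comb_mult)
qed

end

theorem proposition5:
  fixes M :: "'a measure" and l m :: nat and \<rho> \<gamma> :: real
    and X :: "nat \<Rightarrow> 'a \<Rightarrow> real" and N :: "nat set \<Rightarrow> 'a \<Rightarrow> real"
  defines "F \<equiv> sigma (space M) (rv_sets M {S. S \<subseteq> {1..l} \<and> card S = m}
                 (\<lambda>S \<omega>. (\<Sum>i\<in>S. X i \<omega>) + sqrt \<gamma> * N S \<omega>))"
    and "\<eta>1 \<equiv> cbinom (int l - 1) (int m - 1) * cbinom (int l - 2) (int m - 1) * real m
                * (1 - \<rho>) * (1 + (real l - 1) * \<rho>)"
    and "\<eta>2 \<equiv> cbinom (int l - 1) (int m - 1) * (1 + (real m - 1) * \<rho>)
              + cbinom (int l - 2) (int m - 1) * real m * (1 + (real l - 2) * \<rho>)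
              + cbinom (int l - 2) (int m - 2) * ((real l - 1) * real m * \<rho> + (real m - 1) * (1 - \<rho>))"
    and "\<eta>3 \<equiv> cbinom (int l - 1) (int m - 1) * (1 + (real m - 1) * \<rho>)
              + cbinom (int l - 2) (int m - 1) * (real l - 1) * real m * \<rho>\<^sup>2
              + cbinom (int l - 2) (int m - 2) * (real l - 1) * \<rho> * (1 + (real m - 1) * \<rho>)"
    and "\<eta>4 \<equiv> cbinom (int l - 1) (int m - 1) * \<rho> * (1 + (real m - 1) * \<rho>)
              + cbinom (int l - 2) (int m - 1) * real m * \<rho> * (1 + (real l - 2) * \<rho>)
              + cbinom (int l - 2) (int m - 2) * (1 + (real l - 2) * \<rho>) * (1 + (real m - 1) * \<rho>)"
  assumes "prob_space M"
    and "l \<ge> 2"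
    and "-1 / (real l - 1) < \<rho>" and "\<rho> < 1"
    and "1 \<le> m" and "m \<le> l"
    and "\<gamma> > 0"
    and "jointly_gaussian M {1..l} X (\<lambda>_. 0) (\<lambda>i j. if i = j then 1 else \<rho>)"
    and "\<forall>S\<in>{S. S \<subseteq> {1..l} \<and> card S = m}. distributed M lborel (N S) (normal_density 0 1)"
    and "prob_space.indep_sets M
           (\<lambda>k. sigma_sets (space M)
                  (case k of None \<Rightarrow> rv_sets M {1..l} X | Some S \<Rightarrow> rv_sets M {S} N))
           (insert None (Some ` {S. S \<subseteq> {1..l} \<and> card S = m}))"
  shows "(\<forall>i\<in>{1..l}.
           integral\<^sup>L M (\<lambda>\<omega>. (X i \<omega> - real_cond_exp M F (X i) \<omega>) * (X i \<omega> - real_cond_exp M F (X i) \<omega>))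
             = 1 - (\<eta>3 * \<gamma> + \<eta>1) / (\<gamma>\<^sup>2 + \<eta>2 * \<gamma> + \<eta>1)) \<and>
         (\<forall>i\<in>{1..l}. \<forall>j\<in>{1..l}. i \<noteq> j \<longrightarrow>
           integral\<^sup>L M (\<lambda>\<omega>. (X i \<omega> - real_cond_exp M F (X i) \<omega>) * (X j \<omega> - real_cond_exp M F (X j) \<omega>))
             = \<rho> - (\<eta>4 * \<gamma> + \<eta>1 * \<rho>) / (\<gamma>\<^sup>2 + \<eta>2 * \<gamma> + \<eta>1))"
proof -
  interpret equicorrelated_observations M "{1..l}" l m \<rho> \<gamma> X N
  proof (intro equicorrelated_observations.intro equicorrelated_observations_axioms.intro)
    show "prob_space M" by (rule assms(6))
  qed (use assms(7-) in \<open>simp_all add: subsets_of_size_def\<close>)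
  have F: "F = sigma (space M) (rv_sets M obs_sets (\<lambda>S \<omega>. (\<Sum>k\<in>S. X k \<omega>) + sqrt \<gamma> * N S \<omega>))"
    by (simp add: F_def subsets_of_size_def)
  have "real l \<ge> 2" "real m \<ge> 1" using l m by simp_all
  note closed_form = equicorrelated_error_closed_form[of n_pair n_sep n_pt "real l" "real m" n_all \<rho> \<gamma>,
      OF n_pt_split[symmetric] n_pair_eq n_all_eq this \<rho>_bound \<rho>_upper \<gamma> n_pt_pos n_sep_nonneg,
      folded \<alpha>_def, folded \<beta>_def]
  note \<eta>_defs = \<eta>1_def \<eta>2_def \<eta>3_def \<eta>4_def n_pt_def[symmetric] n_pair_def[symmetric] n_sep_def[symmetric]
  show ?thesis
  proof (intro conjI ballI impI)
    fix i assume i: "i \<in> {1..l}"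
    show "integral\<^sup>L M (\<lambda>\<omega>. (X i \<omega> - real_cond_exp M F (X i) \<omega>) * (X i \<omega> - real_cond_exp M F (X i) \<omega>))
        = 1 - (\<eta>3 * \<gamma> + \<eta>1) / (\<gamma>\<^sup>2 + \<eta>2 * \<gamma> + \<eta>1)"
      unfolding F integral_error_mult[OF i i] resid_covariance[OF i i] \<eta>_defs
      using closed_form(1) by simp
  next
    fix i j assume i: "i \<in> {1..l}" and j: "j \<in> {1..l}" and "i \<noteq> j"
    show "integral\<^sup>L M (\<lambda>\<omega>. (X i \<omega> - real_cond_exp M F (X i) \<omega>) * (X j \<omega> - real_cond_exp M F (X j) \<omega>))
        = \<rho> - (\<eta>4 * \<gamma> + \<eta>1 * \<rho>) / (\<gamma>\<^sup>2 + \<eta>2 * \<gamma> + \<eta>1)"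
      unfolding F integral_error_mult[OF i j] resid_covariance[OF i j] \<eta>_defs
      using closed_form(2) \<open>i \<noteq> j\<close> by simp
  qed
qed

end
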